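(* In the setting of the context, assume that for every $k$ the map $\epsilon\mapsto\pi_\epsilon(k)$ is $C^1$ and that $\epsilon\mapsto\eta_{k,\epsilon}$ is $C^1$ as a distribution of order one with derivative $\nu_{k,\epsilon}$. Let $z\in Z$ with $|z|=n+1$, let $k=(k_0,\dots,k_n)$ be the family indices compatible with $z$, and let $\mathbb P_{z,j,\epsilon}=\eta_{k_0,\epsilon}\times\cdots\times\eta_{k_{j-1},\epsilon}\times\nu_{k_j,\epsilon}\times\eta_{k_{j+1},\epsilon}\times\cdots\times\eta_{k_n,\epsilon}$. Then $a_{k,\epsilon}$ and $B_{k,\epsilon}(\hat h)$ are differentiable in $\epsilon$, and $$\partial_\epsilon a_{k,\epsilon}=\sum_{j=0}^n\partial_\epsilon\pi_{k_j,\epsilon}\prod_{i\ne j}\pi_{k_i,\epsilon},$$ $$\partial_\epsilon B_{k,\epsilon}(\hat h)=\sum_{j=0}^n\int_{I_{k_0}\times\cdots\times I_{k_n}}\Big[\hat h'\circ g_{z,u_0,\dots,u_n}\,\partial_{u_j}g_{z,u_0,\dots,u_n}\,|g'_{z,u_0,\dots,u_n}|+\hat h\circ g_{z,u_0,\dots,u_n}\,\partial_{u_j}|g'_{z,u_0,\dots,u_n}|\Big]\,d\mathbb P_{z,j,\epsilon}(u_0,\dots,u_n),$$ $$\partial_\epsilon\hat\psi_z(\epsilon,\cdot)=\partial_\epsilon a_{k,\epsilon}\cdot B_{k,\epsilon}(\hat h)(\cdot)+a_{k,\epsilon}\cdot\partial_\epsilon B_{k,\epsilon}(\hat h)(\c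dot).$$
   Context: $X=[0,1]$, $\Delta\subset X$ closed subinterval. For $k=1,\dots,\ell$, $I_k$ compact interval and $T_{k,u}$ ($u\in I_k$) piecewise $C^1$ maps of $X$ with countably many monotone full branches, $\Delta$ a union of monotonicity intervals; branches are labelled $s\in S=S^{in}\cup S^{out}$ ($S^{in}$: branches with domain in $\Delta$), each label carrying its family index $k$; $g_{s,k,u}$ inverse branches. $\mathbb P_\epsilon$ is a probability on $\{1,\dots,\ell\}\times\mathbb R$ supported on $\bigcup_k\{k\}\times I_k$, with marginal $\pi_\epsilon$ on $\{1,\dots,\ell\}$ (write $\pi_{k,\epsilon}=\pi_\epsilon(k)$) and conditional measures $\eta_{k,\epsilon}$ on $I_k$. $Z$: words $z=z_0\cdots z_n$, $z_0\in S^{in}$, $z_i\in S^{out}$; $g_{z,u_0,\dots,u_n}=g_{z_0,k_0,u_0}\circ\cdots\circ g_{z_n,k_n,u_n}$, assumed $C^3$. $\hat h$ is a $C^1$ function on $\Delta$ (the stationary density of the induced system at $\epsilon=0$). $a_{k,\epsilon}=\prod_{j=0}^{|z|-1}\pi_{k_j,\epsilon}$; $B_{k,\epsilon}(\Phi)=\int_{I_{k_0}\times\cdots\times I_{k_n}}\Phi\circ g_{z,u_0,\dots,u_n}|g'_{z,u_0,\dots,u_n}|\,d\eta_{k_0,\epsilon}\cdots d\eta_{k_n,\epsilon}$; $\hat\psi_z(\epsilon,\cdot)=\int\hat h\circ g_{z,\hat\omega}|g'_{z,\hat\omega}|\,d\mathbb P_\epsilon^{\mathbb N}(\hat\omega)=a_{k,\epsilon}B_{k,\epsilon}(\hat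 h)$. "$\epsilon\mapsto\eta_{k,\epsilon}$ is $C^1$ as a distribution of order one": for every $C^1$ function $\varphi\colon I_k\to\mathbb R$, $\partial_\epsilon\int_{I_k}\varphi\,d\eta_{k,\epsilon}=\int_{I_k}\frac{d\varphi}{du}\,d\nu_{k,\epsilon}$, where $\nu_{k,\epsilon}$, $\epsilon\in V$, is a continuous family of signed measures of bounded total variation. *)

theory Defs
  imports "HOL-Probability.Probability"
begin

text \<open>Composition of the inverse branches along a word z = z_0 ... z_n:
  gb j t is the inverse branch g_{z_j,k_j,t}; the result is
  g_{z,u_0,...,u_n} = g_{z_0,k_0,u_0} o ... o g_{z_n,k_n,u_n}.\<close>
definition gcomp :: "(nat \<Rightarrow> real \<Rightarrow> real \<Rightarrow> real) \<Rightarrow> nat \<Rightarrow> (nat \<Rightarrow> real) \<Rightarrow> real \<Rightarrow> real" where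
  "gcomp gb n u x = foldr (\<lambda>j f. gb j (u j) \<circ> f) [0..<Suc n] id x"

definition gvec :: "(nat \<Rightarrow> real \<Rightarrow> real \<Rightarrow> real) \<Rightarrow> nat \<Rightarrow> (nat \<Rightarrow> real) \<Rightarrow> real" where
  "gvec gb n w = gcomp gb n w (w (Suc n))"

definition gbox :: "(nat \<Rightarrow> real set) \<Rightarrow> (nat \<Rightarrow> nat) \<Rightarrow> nat \<Rightarrow> (nat \<Rightarrow> real) set" where
  "gbox I k n = {w. (\<forall>j\<le>n. w j \<in> I (k j)) \<and> w (Suc n) \<in> {0..1}}"

definition pderiv_box :: "(nat \<Rightarrow> real) set \<Rightarrow> nat \<Rightarrow> ((nat \<Rightarrow> real) \<Rightarrow> real) \<Rightarrow> (nat \<Rightarrow> real) \<Rightarrow> real" where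
  "pderiv_box B i f w = (SOME d. ((\<lambda>t. f (w(i := t))) has_real_derivative d) (at (w i) within {t. w(i := t) \<in> B}))"

fun Ck_on :: "nat \<Rightarrow> nat set \<Rightarrow> (nat \<Rightarrow> real) set \<Rightarrow> ((nat \<Rightarrow> real) \<Rightarrow> real) \<Rightarrow> bool" where
  "Ck_on 0 N B f = continuous_on B f"
| "Ck_on (Suc m) N B f = (continuous_on B f \<and>
     (\<forall>i\<in>N. (\<forall>w\<in>B. ((\<lambda>t. f (w(i := t))) has_real_derivative pderiv_box B i f w)
                        (at (w i) within {t. w(i := t) \<in> B}))
           \<and> Ck_on m N B (pderiv_box B i f)))"

text \<open>Partial derivative d/du_i of g_{z,u}(x) (i \<le> n), and for i = n+1 the
  x-derivative g'_{z,u}(x).\<close>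
definition gder :: "(nat \<Rightarrow> real \<Rightarrow> real \<Rightarrow> real) \<Rightarrow> (nat \<Rightarrow> real set) \<Rightarrow> (nat \<Rightarrow> nat) \<Rightarrow> nat
                    \<Rightarrow> nat \<Rightarrow> (nat \<Rightarrow> real) \<Rightarrow> real \<Rightarrow> real" where
  "gder gb I k n i u x = pderiv_box (gbox I k n) i (gvec gb n) (u(Suc n := x))"

definition absgder_der :: "(nat \<Rightarrow> real \<Rightarrow> real \<Rightarrow> real) \<Rightarrow> (nat \<Rightarrow> real set) \<Rightarrow> (nat \<Rightarrow> nat) \<Rightarrow> nat
                    \<Rightarrow> nat \<Rightarrow> (nat \<Rightarrow> real) \<Rightarrow> real \<Rightarrow> real" where
  "absgder_der gb I k n j u x =
     pderiv_box (gbox I k n) j (\<lambda>w. \<bar>pderiv_box (gbox I k n) (Suc n) (gvec gb n) w\<bar>) (u(Suc n := x))"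

definition a_word :: "(nat \<Rightarrow> real) \<Rightarrow> nat \<Rightarrow> (nat \<Rightarrow> nat) \<Rightarrow> real" where
  "a_word p n k = (\<Prod>j\<le>n. p (k j))"

definition B_word :: "(nat \<Rightarrow> real measure) \<Rightarrow> (nat \<Rightarrow> real \<Rightarrow> real \<Rightarrow> real) \<Rightarrow> (nat \<Rightarrow> real set)
                      \<Rightarrow> (nat \<Rightarrow> nat) \<Rightarrow> nat \<Rightarrow> (real \<Rightarrow> real) \<Rightarrow> real \<Rightarrow> real" where
  "B_word eta gb I k n \<Phi> x =
     set_lebesgue_integral (PiM {..n} (\<lambda>j. eta (k j))) (PiE {..n} (\<lambda>j. I (k j)))
       (\<lambda>u. \<Phi> (gcomp gb n u x) * \<bar>gder gb I k n (Suc n) u x\<bar>)"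

text \<open>The product measure eta_{k_0} x ... x mu (at slot j) x ... x eta_{k_n}.
  With mu = nu^+ resp. nu^- this gives the two parts of the signed measure P_{z,j,eps}.\<close>
definition Pz :: "(nat \<Rightarrow> real measure) \<Rightarrow> real measure \<Rightarrow> nat \<Rightarrow> (nat \<Rightarrow> nat) \<Rightarrow> nat \<Rightarrow> (nat \<Rightarrow> real) measure" where
  "Pz eta mu j k n = PiM {..n} (\<lambda>i. if i = j then mu else eta (k i))"

text \<open>Integral of F over I_{k_0} x ... x I_{k_n} against the signed measure P_{z,j,eps},
  where nu_{k_j,eps} = nup - num.\<close>
definition Pz_int :: "(nat \<Rightarrow> real measure) \<Rightarrow> real measure \<Rightarrow> real measure \<Rightarrow> nat \<Rightarrow> (nat \<Rightarrow> nat)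
                      \<Rightarrow> (nat \<Rightarrow> real set) \<Rightarrow> nat \<Rightarrow> ((nat \<Rightarrow> real) \<Rightarrow> real) \<Rightarrow> real" where
  "Pz_int eta nup num j k I n F =
     set_lebesgue_integral (Pz eta nup j k n) (PiE {..n} (\<lambda>i. I (k i))) F
   - set_lebesgue_integral (Pz eta num j k n) (PiE {..n} (\<lambda>i. I (k i))) F"

text \<open>psi_hat_z(eps, x) = a_{k,eps} B_{k,eps}(h_hat)(x) (the identity given in the setting).\<close>
definition psi_hat :: "(nat \<Rightarrow> real) \<Rightarrow> (nat \<Rightarrow> real measure) \<Rightarrow> (nat \<Rightarrow> real \<Rightarrow> real \<Rightarrow> real) \<Rightarrow> (nat \<Rightarrow> real set)
                      \<Rightarrow> (nat \<Rightarrow> nat) \<Rightarrow> nat \<Rightarrow> (real \<Rightarrow> real) \<Rightarrow> real \<Rightarrow> real" where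
  "psi_hat p eta gb I k n hh x = a_word p n k * B_word eta gb I k n hh x"

end

theory Submission
  imports Defs "HOL-Analysis.Function_Metric"
begin

text \<open>
  The derivative of \<open>a\<^sub>k\<close> is the product rule. For \<open>B\<^sub>k\<close>, the factors of the product measure are
  moved from \<open>\<epsilon>\<close> to \<open>\<epsilon> + h\<close> one at a time, which telescopes the difference quotient into one term
  per coordinate \<open>j\<close>: the integral, against \<open>\<eta>\<close> at \<open>\<epsilon> + h\<close> minus \<open>\<eta>\<close> at \<open>\<epsilon>\<close>, of the section
  integral obtained by integrating out all other coordinates. The section integral is \<open>C\<^sup>1\<close> in its free
  coordinate (differentiation under the integral, using uniform continuity on the compact box), so the
  hypothesis on \<open>\<eta>\<close> and the mean value theorem express each term as \<open>\<nu>\<close> at an intermediate parameter.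
  As \<open>h \<rightarrow> 0\<close> the section integrals converge uniformly (approximate the integrand by sums of products
  of one-variable functions, by Stone--Weierstrass), and \<open>\<nu>\<close> is locally uniformly bounded by the
  Banach--Steinhaus theorem, so these terms converge to the stated limit. The integrand is \<open>C\<^sup>1\<close>
  because the inverse branches are \<open>C\<^sup>3\<close> and \<open>g' \<noteq> 0\<close> makes \<open>|g'|\<close> differentiable.
\<close>

section \<open>Elementary real analysis\<close>

lemma abs_linear_approx_le:
  fixes f f' :: "real \<Rightarrow> real"
  assumes S: "convex S" "a \<in> S" "b \<in> S"
    and f: "\<And>x. x \<in> S \<Longrightarrow> (f has_real_derivative f' x) (at x within S)"
    and bound: "\<And>x. x \<in> closed_segment a b \<Longrightarrow> \<bar>f' x - f' a\<bar> \<le> c"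
  shows "\<bar>f b - f a - (b - a) * f' a\<bar> \<le> c * \<bar>b - a\<bar>"
proof -
  have seg: "closed_segment a b \<subseteq> S"
    using closed_segment_subset[OF S(2,3,1)] .
  have "norm ((\<lambda>x. f x - x * f' a) b - (\<lambda>x. f x - x * f' a) a) \<le> c * norm (b - a)"
  proof (rule field_differentiable_bound[where f'="\<lambda>x. f' x - f' a"])
    fix x assume x: "x \<in> closed_segment a b"
    then have "(f has_real_derivative f' x) (at x within closed_segment a b)"
      using has_field_derivative_subset[OF f seg] seg by blast
    then show "((\<lambda>x. f x - x * f' a) has_field_derivative f' x - f' a) (at x within closed_segment a b)"
      by (auto intro!: derivative_eq_intros)
    show "norm (f' x - f' a) \<le> c"
      using bound[OF x] by simp
  qed auto
  then show ?thesis
    by (simp add: algebra_simps)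
qed

lemma MVT_symmetric:
  fixes g g' :: "real \<Rightarrow> real"
  assumes "h \<noteq> 0" and deriv: "\<And>s. \<bar>s - e\<bar> \<le> \<bar>h\<bar> \<Longrightarrow> (g has_real_derivative g' s) (at s)"
  obtains \<xi> where "\<bar>\<xi> - e\<bar> \<le> \<bar>h\<bar>" "g (e + h) - g e = h * g' \<xi>"
proof (cases "h > 0")
  case True
  then obtain z where "e < z" "z < e + h" "g (e + h) - g e = (e + h - e) * g' z"
    using MVT2[of e "e + h" g g'] deriv by auto
  then show ?thesis
    using that[of z] True by auto
next
  case False
  with \<open>h \<noteq> 0\<close> have "h < 0" by simp
  then obtain z where "e + h < z" "z < e" "g e - g (e + h) = (e - (e + h)) * g' z"
    using MVT2[of "e + h" e g g'] deriv by auto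
  then show ?thesis
    using that[of z] \<open>h < 0\<close> by (auto simp: algebra_simps)
qed

lemma difference_quotient_tendsto:
  fixes g g' :: "real \<Rightarrow> real \<Rightarrow> real"
  assumes deriv: "\<forall>\<^sub>F h in at 0. \<forall>s. \<bar>s - e\<bar> \<le> \<bar>h\<bar> \<longrightarrow> (g h has_real_derivative g' h s) (at s)"
    and unif: "\<And>c. 0 < c \<Longrightarrow> \<forall>\<^sub>F h in at 0. \<forall>s. \<bar>s - e\<bar> \<le> \<bar>h\<bar> \<longrightarrow> \<bar>g' h s - L\<bar> < c"
  shows "((\<lambda>h. (g h (e + h) - g h e) / h) \<longlongrightarrow> L) (at 0)"
  unfolding tendsto_iff
proof (intro allI impI)
  fix c :: real assume "0 < c"
  have "\<forall>\<^sub>F h in at (0::real). h \<noteq> 0"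
    by (rule eventually_neq_at_within)
  with deriv unif[OF \<open>0 < c\<close>]
  show "\<forall>\<^sub>F h in at 0. dist ((g h (e + h) - g h e) / h) L < c"
  proof eventually_elim
    case (elim h)
    then obtain \<xi> where "\<bar>\<xi> - e\<bar> \<le> \<bar>h\<bar>" "g h (e + h) - g h e = h * g' h \<xi>"
      using MVT_symmetric[of h e "g h" "g' h"] by blast
    then show ?case
      using elim by (simp add: dist_real_def)
  qed
qed

lemma uniform_limit_tendsto_const:
  "(P \<longlongrightarrow> P0) F \<Longrightarrow> uniform_limit S (\<lambda>h t. P h) (\<lambda>t. P0) F"
  by (simp add: uniform_limit_iff tendsto_iff)

lemma uniform_limit_sum_list_scaled:
  fixes g :: "'c \<Rightarrow> real \<Rightarrow> real"
  assumes "compact K" "\<And>c. c \<in> set cs \<Longrightarrow> continuous_on K (g c)"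
    and "\<And>c. c \<in> set cs \<Longrightarrow> ((\<lambda>h. P h c) \<longlongrightarrow> P0 c) F"
  shows "uniform_limit K (\<lambda>h t. \<Sum>c\<leftarrow>cs. g c t * P h c) (\<lambda>t. \<Sum>c\<leftarrow>cs. g c t * P0 c) F"
  using assms(2,3)
proof (induction cs)
  case Nil
  then show ?case
    by (simp add: uniform_limit_const)
next
  case (Cons c cs)
  have "uniform_limit K (\<lambda>h t. g c t * P h c) (\<lambda>t. g c t * P0 c) F"
  proof (rule uniform_lim_mult[OF uniform_limit_const uniform_limit_tendsto_const])
    show "((\<lambda>h. P h c) \<longlongrightarrow> P0 c) F"
      using Cons.prems by simp
    show "bounded (g c ` K)"
      using Cons.prems assms(1) by (intro compact_imp_bounded compact_continuous_image) auto
    show "bounded ((\<lambda>t. P0 c) ` K)"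
      by (rule finite_imp_bounded) (simp add: image_constant_conv)
  qed
  then show ?case
    using Cons by (simp add: uniform_limit_add)
qed

lemma has_real_derivative_abs:
  fixes y :: real
  assumes "y \<noteq> 0"
  shows "(abs has_real_derivative sgn y) (at y)"
proof -
  have "norm = (abs :: real \<Rightarrow> real)" "(\<lambda>h. h * sgn y) = (*) (sgn y)"
    by (auto simp: fun_eq_iff)
  then show ?thesis
    using has_derivative_norm[OF assms] by (simp add: has_field_derivative_def inner_real_def)
qed

lemma continuous_on_sgn:
  fixes f :: "'a::topological_space \<Rightarrow> real"
  assumes "continuous_on S f" "\<And>w. w \<in> S \<Longrightarrow> f w \<noteq> 0"
  shows "continuous_on S (\<lambda>w. sgn (f w))"
proof -
  have "continuous_on S (\<lambda>w. f w / \<bar>f w\<bar>)"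
    using assms by (intro continuous_intros) auto
  then show ?thesis
    by (rule continuous_on_eq) (simp add: assms(2) sgn_if)
qed

section \<open>Integrals of continuous functions against finite measures\<close>

lemma set_integrable_continuous_on_compact:
  fixes f :: "'a::t2_space \<Rightarrow> real"
  assumes "finite_measure M" "sets M = sets borel" "compact J" "continuous_on J f"
  shows "set_integrable M J f"
proof -
  interpret finite_measure M by fact
  have "(\<lambda>t. indicator J t *\<^sub>R f t) \<in> borel_measurable M"
    using borel_measurable_continuous_on_indicator[of J f] assms compact_imp_closed[OF assms(3)]
    by (simp add: measurable_cong_sets[OF assms(2) refl])
  moreover obtain B where "B \<ge> 0" "\<And>t. t \<in> J \<Longrightarrow> norm (f t) \<le> B"
    using continuous_on_compact_bound[OF assms(3,4)] by blast
  then have "AE t in M. norm (indicator J t *\<^sub>R f t) \<le> B"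
    by (auto simp: indicator_def)
  ultimately show ?thesis
    unfolding set_integrable_def by (rule integrable_const_bound[rotated])
qed

lemma abs_integral_le_integral:
  fixes f g :: "'a \<Rightarrow> real"
  assumes "integrable M f" "integrable M g" "\<And>x. x \<in> space M \<Longrightarrow> \<bar>f x\<bar> \<le> g x"
  shows "\<bar>integral\<^sup>L M f\<bar> \<le> integral\<^sup>L M g"
proof -
  have "\<bar>integral\<^sup>L M f\<bar> \<le> (\<integral>x. \<bar>f x\<bar> \<partial>M)"
    using integral_norm_bound[of M f] by simp
  also have "\<dots> \<le> integral\<^sup>L M g"
    using assms by (intro integral_mono) auto
  finally show ?thesis .
qed

lemma abs_set_integral_diff_le:
  fixes f g :: "'a::t2_space \<Rightarrow> real"
  assumes "finite_measure M" "sets M = sets borel" "compact J" "continuous_on J f" "continuous_on J g"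
    and "0 \<le> c" "\<And>t. t \<in> J \<Longrightarrow> \<bar>f t - g t\<bar> \<le> c"
  shows "\<bar>set_lebesgue_integral M J f - set_lebesgue_integral M J g\<bar> \<le> c * measure M (space M)"
proof -
  interpret finite_measure M by fact
  have int: "set_integrable M J f" "set_integrable M J g"
    using set_integrable_continuous_on_compact assms by blast+
  then have int_diff: "integrable M (\<lambda>t. indicator J t * (f t - g t))"
    using set_integral_diff(1)[OF int] unfolding set_integrable_def by simp
  have "set_lebesgue_integral M J f - set_lebesgue_integral M J g
      = (\<integral>t. indicator J t * (f t - g t) \<partial>M)"
    using set_integral_diff(2)[OF int] by (simp add: set_lebesgue_integral_def)
  also have "\<bar>\<dots>\<bar> \<le> (\<integral>t. c \<partial>M)"
    using assms(6,7) by (intro abs_integral_le_integral int_diff integrable_const) (auto simp: indicator_def)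
  finally show ?thesis by (simp add: mult.commute)
qed

lemma set_integral_eq_integral_indicator:
  fixes c :: "real \<Rightarrow> real"
  assumes "finite_measure N" "sets N = sets borel" "compact K" "continuous_on K c"
  shows "integrable N (\<lambda>t. indicator K t * c t)"
    and "(\<integral>t. indicator K t * c t \<partial>N) = set_lebesgue_integral N K c"
  using set_integrable_continuous_on_compact[OF assms]
  unfolding set_integrable_def set_lebesgue_integral_def by simp_all

lemma integral_sum_list:
  fixes f :: "'c \<Rightarrow> 'a \<Rightarrow> real"
  assumes "\<And>c. c \<in> set cs \<Longrightarrow> integrable M (f c)"
  shows "(\<integral>x. (\<Sum>c\<leftarrow>cs. f c x) \<partial>M) = (\<Sum>c\<leftarrow>cs. integral\<^sup>L M (f c))"
    and "integrable M (\<lambda>x. \<Sum>c\<leftarrow>cs. f c x)"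
  using assms by (induction cs) auto

lemma uniform_approx_by_C1:
  fixes f :: "real \<Rightarrow> real"
  assumes "compact J" "continuous_on J f" "0 < c"
  obtains g g' where "\<And>x. (g has_real_derivative g' x) (at x)" "continuous_on UNIV g'"
    "\<And>x. x \<in> J \<Longrightarrow> \<bar>f x - g x\<bar> < c"
proof -
  obtain g where g: "polynomial_function g" "\<forall>x\<in>J. norm (f x - g x) < c"
    using Stone_Weierstrass_polynomial_function[OF assms] by blast
  obtain g' where "polynomial_function g'" "\<And>x. (g has_vector_derivative g' x) (at x)"
    using has_vector_derivative_polynomial_function[OF g(1)] by blast
  then show ?thesis
    using that[of g g'] g continuous_on_polymonial_function
    by (auto simp: has_real_derivative_iff_has_vector_derivative)
qed

lemma uniform_limit_set_integral:
  fixes E :: "'b \<Rightarrow> 'a::t2_space measure" and f :: "'a \<Rightarrow> real"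
  assumes E: "\<And>s. s \<in> V \<Longrightarrow> prob_space (E s) \<and> sets (E s) = sets borel"
    and J: "compact J" and f: "continuous_on J f" and G: "\<And>m. continuous_on J (G m)"
    and approx: "\<And>m x. x \<in> J \<Longrightarrow> \<bar>f x - G m x\<bar> < 1 / Suc m"
  shows "uniform_limit V (\<lambda>m s. set_lebesgue_integral (E s) J (G m)) (\<lambda>s. set_lebesgue_integral (E s) J f) sequentially"
  unfolding uniform_limit_iff
proof (intro allI impI)
  fix c :: real assume "0 < c"
  then obtain N :: nat where N: "1 / Suc N < c"
    by (metis nat_approx_posE)
  show "\<forall>\<^sub>F m in sequentially. \<forall>s\<in>V. dist (set_lebesgue_integral (E s) J (G m)) (set_lebesgue_integral (E s) J f) < c"
    unfolding eventually_sequentially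
  proof (intro exI allI impI ballI)
    fix m s assume "N \<le> m" "s \<in> V"
    then interpret prob_space "E s"
      using E by blast
    have "\<bar>set_lebesgue_integral (E s) J (G m) - set_lebesgue_integral (E s) J f\<bar> \<le> 1 / Suc m * measure (E s) (space (E s))"
      using E \<open>s \<in> V\<close> approx
      by (intro abs_set_integral_diff_le[OF finite_measure_axioms _ J G f]) (auto simp: abs_minus_commute less_imp_le)
    also have "\<dots> \<le> 1 / Suc N"
      using \<open>N \<le> m\<close> by (simp add: prob_space frac_le)
    finally show "dist (set_lebesgue_integral (E s) J (G m)) (set_lebesgue_integral (E s) J f) < c"
      using N by (simp add: dist_real_def)
  qed
qed

lemma continuous_on_set_integral_of_C1:
  fixes E :: "real \<Rightarrow> real measure" and f :: "real \<Rightarrow> real"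
  assumes E: "\<And>s. s \<in> V \<Longrightarrow> prob_space (E s) \<and> sets (E s) = sets borel"
    and J: "compact J"
    and C1: "\<And>\<phi> \<phi>'. (\<And>u. u \<in> J \<Longrightarrow> (\<phi> has_real_derivative \<phi>' u) (at u within J)) \<Longrightarrow>
               continuous_on J \<phi>' \<Longrightarrow> continuous_on V (\<lambda>s. set_lebesgue_integral (E s) J \<phi>)"
    and f: "continuous_on J f"
  shows "continuous_on V (\<lambda>s. set_lebesgue_integral (E s) J f)"
proof -
  have "\<exists>g g'. (\<forall>x. (g has_real_derivative g' x) (at x)) \<and> continuous_on UNIV g'
           \<and> (\<forall>x\<in>J. \<bar>f x - g x\<bar> < 1 / Suc m)" for m
  proof -
    have "0 < 1 / real (Suc m)" by simp
    from uniform_approx_by_C1[OF J f this] show ?thesis by metis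
  qed
  then obtain G G' where G: "\<And>m x. (G m has_real_derivative G' m x) (at x)" "\<And>m. continuous_on UNIV (G' m)"
      "\<And>m x. x \<in> J \<Longrightarrow> \<bar>f x - G m x\<bar> < 1 / Suc m"
    by metis
  have G_cont: "continuous_on J (G m)" for m
    using G(1) by (meson DERIV_isCont continuous_at_imp_continuous_on)
  have "continuous_on V (\<lambda>s. set_lebesgue_integral (E s) J (G m))" for m
    by (rule C1[of _ "G' m"]) (auto intro: has_field_derivative_at_within[OF G(1)] continuous_on_subset[OF G(2)])
  moreover have "uniform_limit V (\<lambda>m s. set_lebesgue_integral (E s) J (G m))
      (\<lambda>s. set_lebesgue_integral (E s) J f) sequentially"
    using E J f G_cont G(3) by (rule uniform_limit_set_integral)
  ultimately show ?thesis
    by (intro uniform_limit_theorem) auto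
qed

section \<open>Uniform boundedness of signed integrals\<close>

lemma closed_cover_interior_nonempty:
  fixes A :: "nat \<Rightarrow> 'a::complete_space set"
  assumes closed: "\<And>N. closed (A N)" and cover: "\<Union>(range A) = UNIV"
  obtains N where "interior (A N) \<noteq> {}"
proof -
  have "euclidean interior_of \<Union>(range A) \<noteq> {}"
    by (simp add: cover euclidean_interior_of)
  then obtain N where "euclidean interior_of A N \<noteq> {}"
    using Baire_category_alt[of euclidean "range A"] completely_metrizable_space_euclidean closed
    by auto
  then show thesis
    using that by (simp add: euclidean_interior_of)
qed

lemma bounded_linear_bound_of_unit_ball:
  fixes T :: "'a::real_normed_vector \<Rightarrow> real"
  assumes "bounded_linear T" and unit: "\<And>x. norm x \<le> 1 \<Longrightarrow> \<bar>T x\<bar> \<le> C"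
  shows "\<bar>T x\<bar> \<le> C * norm x"
proof (cases "x = 0")
  case True
  then show ?thesis
    using linear_simps(3)[OF assms(1)] by simp
next
  case False
  interpret bounded_linear T by fact
  have "T x = T (norm x *\<^sub>R (x /\<^sub>R norm x))"
    using False by simp
  also have "\<dots> = norm x * T (x /\<^sub>R norm x)"
    by (simp only: scaleR real_scaleR_def)
  finally have "\<bar>T x\<bar> = norm x * \<bar>T (x /\<^sub>R norm x)\<bar>"
    by (simp add: abs_mult)
  also have "\<dots> \<le> norm x * C"
    using False by (intro mult_left_mono unit) simp_all
  finally show ?thesis
    by (simp add: mult.commute)
qed

lemma uniform_boundedness:
  fixes T :: "'i \<Rightarrow> 'a::{real_normed_vector,complete_space} \<Rightarrow> real"
  assumes lin: "\<And>i. i \<in> S \<Longrightarrow> bounded_linear (T i)"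
    and pointwise: "\<And>x. \<exists>B. \<forall>i\<in>S. \<bar>T i x\<bar> \<le> B"
  obtains C where "C \<ge> 0" "\<And>i x. i \<in> S \<Longrightarrow> \<bar>T i x\<bar> \<le> C * norm x"
proof -
  define A where "A N = {x. \<forall>i\<in>S. \<bar>T i x\<bar> \<le> real N}" for N :: nat
  have "closed (A N)" for N
  proof -
    have "A N = (\<Inter>i\<in>S. {x. \<bar>T i x\<bar> \<le> real N})"
      unfolding A_def by blast
    moreover have "closed {x. \<bar>T i x\<bar> \<le> real N}" if "i \<in> S" for i
      using linear_continuous_on[OF lin[OF that]]
      by (intro closed_Collect_le continuous_on_rabs continuous_on_const)
    ultimately show ?thesis by (simp add: closed_INT)
  qed
  moreover have "\<Union>(range A) = UNIV"
  proof -
    have "x \<in> A (nat \<lceil>B\<rceil>)" if "\<forall>i\<in>S. \<bar>T i x\<bar> \<le> B" for x B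
      using that order_trans[OF _ real_nat_ceiling_ge] unfolding A_def by blast
    then have "x \<in> \<Union>(range A)" for x
      using pointwise[of x] by blast
    then show ?thesis by blast
  qed
  ultimately obtain N where "interior (A N) \<noteq> {}"
    by (rule closed_cover_interior_nonempty)
  then obtain x0 \<rho> where "\<rho> > 0" "ball x0 \<rho> \<subseteq> A N"
    using mem_interior by blast
  \<comment> \<open>Shifting the unit ball into \<open>ball x0 \<rho>\<close> turns the bound on \<open>A N\<close> into one on the unit ball.\<close>
  have unit: "\<bar>T i x\<bar> \<le> 4 * real N / \<rho>" if i: "i \<in> S" and x: "norm x \<le> 1" for i x
  proof -
    interpret bounded_linear "T i" by (rule lin[OF i])
    have "x0 + (\<rho> / 2) *\<^sub>R x \<in> ball x0 \<rho>" "x0 \<in> ball x0 \<rho>"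
      using \<open>\<rho> > 0\<close> x by (auto simp: dist_norm)
    then have "\<bar>T i (x0 + (\<rho> / 2) *\<^sub>R x)\<bar> \<le> real N" "\<bar>T i x0\<bar> \<le> real N"
      using \<open>ball x0 \<rho> \<subseteq> A N\<close> i unfolding A_def by blast+
    then have "\<rho> / 2 * \<bar>T i x\<bar> \<le> 2 * real N"
      using \<open>\<rho> > 0\<close> by (simp add: add scaleR abs_mult)
    then show ?thesis
      using \<open>\<rho> > 0\<close> by (simp add: field_simps)
  qed
  show ?thesis
  proof
    show "0 \<le> 4 * real N / \<rho>"
      using \<open>\<rho> > 0\<close> by simp
    show "\<bar>T i x\<bar> \<le> 4 * real N / \<rho> * norm x" if "i \<in> S" for i x
      using lin[OF that] unit[OF that] by (rule bounded_linear_bound_of_unit_ball)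
  qed
qed

lemma bcontfun_extension:
  fixes f :: "real \<Rightarrow> 'a::real_normed_vector"
  assumes f: "continuous_on {lo..hi} f" and "lo \<le> hi" and bound: "\<And>t. t \<in> {lo..hi} \<Longrightarrow> norm (f t) \<le> c"
  obtains \<phi> where "\<And>t. t \<in> {lo..hi} \<Longrightarrow> apply_bcontfun \<phi> t = f t" "norm \<phi> \<le> c"
proof -
  define g where "g t = f (max lo (min hi t))" for t
  have clamp: "max lo (min hi t) \<in> {lo..hi}" for t
    using \<open>lo \<le> hi\<close> by auto
  have "continuous_on UNIV g"
    unfolding g_def by (rule continuous_on_compose2[OF f]) (use clamp in \<open>auto intro!: continuous_intros\<close>)
  moreover have "norm (g t) \<le> c" for t
    unfolding g_def using bound clamp by blast
  ultimately have "g \<in> bcontfun"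
    by (rule bcontfun_normI)
  then have g: "apply_bcontfun (Bcontfun g) = g"
    by (rule Bcontfun_inverse)
  show ?thesis
  proof
    show "apply_bcontfun (Bcontfun g) t = f t" if "t \<in> {lo..hi}" for t
      using that by (simp add: g g_def)
    show "norm (Bcontfun g) \<le> c"
      using bound[of lo] \<open>lo \<le> hi\<close> \<open>\<And>t. norm (g t) \<le> c\<close> by (intro norm_bound) (auto simp: g)
  qed
qed

definition signed_set_integral :: "'a measure \<Rightarrow> 'a measure \<Rightarrow> 'a set \<Rightarrow> ('a \<Rightarrow> real) \<Rightarrow> real" where
  "signed_set_integral P Q A f = set_lebesgue_integral P A f - set_lebesgue_integral Q A f"

lemma bounded_linear_signed_set_integral:
  assumes "finite_measure P" "sets P = sets borel" "finite_measure Q" "sets Q = sets borel" "compact J"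
  shows "bounded_linear (\<lambda>\<phi>::real \<Rightarrow>\<^sub>C real. signed_set_integral P Q J (apply_bcontfun \<phi>))"
proof (rule bounded_linear_intro)
  have int: "set_integrable M J (apply_bcontfun \<phi>)"
    if "finite_measure M" "sets M = sets borel" for M and \<phi> :: "real \<Rightarrow>\<^sub>C real"
    using set_integrable_continuous_on_compact[OF that \<open>compact J\<close>] by simp
  show "signed_set_integral P Q J (apply_bcontfun (\<phi> + \<psi>))
      = signed_set_integral P Q J (apply_bcontfun \<phi>) + signed_set_integral P Q J (apply_bcontfun \<psi>)" for \<phi> \<psi>
    using int[OF assms(1,2)] int[OF assms(3,4)]
    by (simp add: signed_set_integral_def set_integral_add)
  show "signed_set_integral P Q J (apply_bcontfun (r *\<^sub>R \<phi>)) = r *\<^sub>R signed_set_integral P Q J (apply_bcontfun \<phi>)"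
    for r \<phi>
    by (simp add: signed_set_integral_def set_integral_mult_right right_diff_distrib)
  have bound: "\<bar>set_lebesgue_integral M J (apply_bcontfun \<phi>)\<bar> \<le> norm \<phi> * measure M (space M)"
    if "finite_measure M" "sets M = sets borel" for M and \<phi> :: "real \<Rightarrow>\<^sub>C real"
  proof -
    have "\<bar>set_lebesgue_integral M J (apply_bcontfun \<phi>) - set_lebesgue_integral M J (\<lambda>_. 0)\<bar>
        \<le> norm \<phi> * measure M (space M)"
      using norm_bounded[of \<phi>]
      by (intro abs_set_integral_diff_le[OF that \<open>compact J\<close>]) (auto simp: continuous_on_const)
    then show ?thesis by simp
  qed
  show "norm (signed_set_integral P Q J (apply_bcontfun \<phi>))
      \<le> norm \<phi> * (measure P (space P) + measure Q (space Q))" for \<phi>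
  proof -
    have "norm (signed_set_integral P Q J (apply_bcontfun \<phi>))
        \<le> \<bar>set_lebesgue_integral P J (apply_bcontfun \<phi>)\<bar> + \<bar>set_lebesgue_integral Q J (apply_bcontfun \<phi>)\<bar>"
      unfolding signed_set_integral_def by (simp add: abs_triangle_ineq4)
    also have "\<dots> \<le> norm \<phi> * measure P (space P) + norm \<phi> * measure Q (space Q)"
      by (intro add_mono bound assms)
    finally show ?thesis by (simp add: distrib_left)
  qed
qed

lemma signed_set_integral_diff:
  fixes f g :: "'a::t2_space \<Rightarrow> real"
  assumes "finite_measure P" "sets P = sets borel" "finite_measure Q" "sets Q = sets borel"
    and "compact A" "continuous_on A f" "continuous_on A g"
  shows "signed_set_integral P Q A (\<lambda>t. f t - g t) = signed_set_integral P Q A f - signed_set_integral P Q A g"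
proof -
  have "set_integrable P A f" "set_integrable P A g" "set_integrable Q A f" "set_integrable Q A g"
    using set_integrable_continuous_on_compact assms by blast+
  then show ?thesis
    by (simp add: signed_set_integral_def set_integral_diff)
qed

text \<open>Banach--Steinhaus on the space of bounded continuous functions, applied to the parameters
  in a compact ball around \<open>e\<close>.\<close>
lemma signed_set_integral_locally_bounded:
  fixes P Q :: "real \<Rightarrow> real measure"
  assumes "open V" "e \<in> V" "lo \<le> hi"
    and PQ: "\<And>s. s \<in> V \<Longrightarrow> finite_measure (P s) \<and> sets (P s) = sets borel \<and> finite_measure (Q s) \<and> sets (Q s) = sets borel"
    and cont: "\<And>f. continuous_on {lo..hi} f \<Longrightarrow> continuous_on V (\<lambda>s. signed_set_integral (P s) (Q s) {lo..hi} f)"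
  obtains \<delta> C where "\<delta> > 0" "cball e \<delta> \<subseteq> V" "C \<ge> 0"
    "\<And>s f c. s \<in> cball e \<delta> \<Longrightarrow> continuous_on {lo..hi} f \<Longrightarrow> (\<And>t. t \<in> {lo..hi} \<Longrightarrow> \<bar>f t\<bar> \<le> c) \<Longrightarrow>
        \<bar>signed_set_integral (P s) (Q s) {lo..hi} f\<bar> \<le> C * c"
proof -
  obtain \<delta> where \<delta>: "\<delta> > 0" "cball e \<delta> \<subseteq> V"
    using assms(1,2) open_contains_cball by blast
  define T where "T s \<phi> = signed_set_integral (P s) (Q s) {lo..hi} (apply_bcontfun \<phi>)"
    for s and \<phi> :: "real \<Rightarrow>\<^sub>C real"
  have pointwise: "\<exists>B. \<forall>s\<in>cball e \<delta>. \<bar>T s \<phi>\<bar> \<le> B" for \<phi>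
  proof -
    have "continuous_on (cball e \<delta>) (\<lambda>s. T s \<phi>)"
      unfolding T_def by (rule continuous_on_subset[OF cont \<delta>(2)]) simp
    then show ?thesis
      using continuous_on_compact_bound[OF compact_cball] by (metis real_norm_def)
  qed
  have lin: "bounded_linear (T s)" if "s \<in> cball e \<delta>" for s
    unfolding T_def using PQ that \<delta>(2) by (intro bounded_linear_signed_set_integral) auto
  obtain C where C: "C \<ge> 0" "\<And>s \<phi>. s \<in> cball e \<delta> \<Longrightarrow> \<bar>T s \<phi>\<bar> \<le> C * norm \<phi>"
    using uniform_boundedness[of "cball e \<delta>" T, OF lin pointwise] by blast
  show ?thesis
  proof (rule that[OF \<delta> C(1)])
    fix s c and f :: "real \<Rightarrow> real"
    assume s: "s \<in> cball e \<delta>" and f: "continuous_on {lo..hi} f"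
      and bound: "\<And>t. t \<in> {lo..hi} \<Longrightarrow> \<bar>f t\<bar> \<le> c"
    have "norm (f t) \<le> c" if "t \<in> {lo..hi}" for t
      using bound[OF that] by simp
    then obtain \<phi> where \<phi>: "\<And>t. t \<in> {lo..hi} \<Longrightarrow> apply_bcontfun \<phi> t = f t" "norm \<phi> \<le> c"
      using bcontfun_extension[OF f \<open>lo \<le> hi\<close>] by blast
    have "signed_set_integral (P s) (Q s) {lo..hi} f = T s \<phi>"
      unfolding T_def signed_set_integral_def set_lebesgue_integral_def
      by (intro arg_cong2[where f="(-)"] Bochner_Integration.integral_cong) (auto simp: \<phi> indicator_def)
    also have "\<bar>\<dots>\<bar> \<le> C * c"
      using order_trans[OF C(2)[OF s] mult_left_mono[OF \<phi>(2) C(1)]] .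
    finally show "\<bar>signed_set_integral (P s) (Q s) {lo..hi} f\<bar> \<le> C * c" .
  qed
qed

section \<open>Functions of finitely many real coordinates\<close>

text \<open>\<open>from_nat\<close> may enumerate the coordinate \<open>j\<close> several times, hence the factor \<open>2\<close>.\<close>
lemma dist_fun_upd_le:
  fixes u :: "'i::countable \<Rightarrow> 'a::metric_space"
  shows "dist (u(j := t)) u \<le> 2 * dist t (u j)"
proof -
  define a where "a n = (1/2::real)^n * min (dist ((u(j := t)) (from_nat n)) (u (from_nat n))) 1" for n
  have a_le: "a n \<le> dist t (u j) * (1/2)^n" for n
    unfolding a_def by (cases "from_nat n = j") (auto simp: mult.commute intro: mult_left_mono)
  have a_nonneg: "0 \<le> a n" for n
    unfolding a_def by simp
  have geom: "summable (\<lambda>n. dist t (u j) * (1/2::real)^n)"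
    by (intro summable_mult summable_geometric) simp
  have "dist (u(j := t)) u = (\<Sum>n. a n)"
    unfolding dist_fun_def a_def ..
  also have "\<dots> \<le> (\<Sum>n. dist t (u j) * (1/2)^n)"
    using a_le a_nonneg geom by (intro suminf_le summable_comparison_test'[OF geom]) auto
  also have "\<dots> = 2 * dist t (u j)"
    using suminf_geometric[of "1/2::real"] by (simp add: suminf_mult)
  finally show ?thesis .
qed

lemma uniformly_continuous_on_fun_upd:
  fixes F :: "('i::countable \<Rightarrow> 'a::metric_space) \<Rightarrow> 'b::metric_space"
  assumes "compact S" "continuous_on S F" "0 < e"
  obtains d where "d > 0"
    "\<And>u t. u \<in> S \<Longrightarrow> u(j := t) \<in> S \<Longrightarrow> dist t (u j) < d \<Longrightarrow> dist (F (u(j := t))) (F u) < e"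
proof -
  obtain d where "d > 0" and d: "\<And>x y. x \<in> S \<Longrightarrow> y \<in> S \<Longrightarrow> dist y x < d \<Longrightarrow> dist (F y) (F x) < e"
    using compact_uniformly_continuous[OF assms(2,1)] assms(3) unfolding uniformly_continuous_on_def by metis
  show ?thesis
  proof (rule that[of "d / 2"])
    show "0 < d / 2" using \<open>d > 0\<close> by simp
    fix u t assume "u \<in> S" "u(j := t) \<in> S" "dist t (u j) < d / 2"
    then show "dist (F (u(j := t))) (F u) < e"
      using dist_fun_upd_le[of u j t] by (intro d) auto
  qed
qed

lemma compact_PiE:
  fixes J :: "'i \<Rightarrow> 'a::topological_space set"
  assumes "\<And>i. i \<in> I \<Longrightarrow> compact (J i)"
  shows "compact (PiE I J)"
proof -
  have eq: "PiE I J = PiE UNIV (\<lambda>i. if i \<in> I then J i else {undefined})"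
    by (auto simp: PiE_iff extensional_def split: if_splits)
  have "compactin (product_topology (\<lambda>i. euclidean) UNIV) (PiE UNIV (\<lambda>i. if i \<in> I then J i else {undefined}))"
    unfolding compactin_PiE using assms by auto
  then show ?thesis
    unfolding eq euclidean_product_topology by simp
qed

lemma continuous_on_fun_upd_const: "continuous_on S (\<lambda>u::'i \<Rightarrow> 'a::topological_space. u(i := x))"
proof (rule continuous_on_coordinatewise_then_product)
  fix i'
  show "continuous_on S (\<lambda>u. (u(i := x)) i')"
    by (cases "i' = i") (auto intro: continuous_on_subset[OF continuous_on_product_coordinates])
qed

lemma fun_upd_in_PiE: "u \<in> PiE I J \<Longrightarrow> j \<in> I \<Longrightarrow> t \<in> J j \<Longrightarrow> u(j := t) \<in> PiE I J"
  by (auto simp: PiE_iff extensional_def)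

lemma indicator_PiE:
  assumes "finite I" "u \<in> extensional I"
  shows "indicator (PiE I J) u = (\<Prod>i\<in>I. indicator (J i) (u i) :: real)"
proof (cases "\<forall>i\<in>I. u i \<in> J i")
  case True
  then show ?thesis
    using assms(2) by (simp add: indicator_def PiE_iff)
next
  case False
  then obtain i where "i \<in> I" "u i \<notin> J i"
    by blast
  then have "(\<Prod>i\<in>I. indicator (J i) (u i) :: real) = 0"
    using assms(1) by (intro prod_zero) (auto intro!: bexI[of _ i])
  then show ?thesis
    using False by (simp add: PiE_iff)
qed

lemma indicator_PiE_fun_upd:
  assumes "j \<in> I" "t \<in> J j" "t' \<in> J j"
  shows "indicator (PiE I J) (u(j := t)) = (indicator (PiE I J) (u(j := t')) :: real)"
  using assms by (auto simp: indicator_def PiE_iff extensional_def)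

definition tensor_sum :: "nat \<Rightarrow> (nat \<Rightarrow> real \<Rightarrow> real) list \<Rightarrow> (nat \<Rightarrow> real) \<Rightarrow> real" where
  "tensor_sum n cs u = (\<Sum>c\<leftarrow>cs. \<Prod>i\<le>n. c i (u i))"

definition continuous_factors :: "nat \<Rightarrow> (nat \<Rightarrow> real set) \<Rightarrow> (nat \<Rightarrow> real \<Rightarrow> real) list \<Rightarrow> bool" where
  "continuous_factors n J cs \<longleftrightarrow> (\<forall>c\<in>set cs. \<forall>i\<le>n. continuous_on (J i) (c i))"

lemma tensor_sum_Nil [simp]: "tensor_sum n [] u = 0"
  by (simp add: tensor_sum_def)

lemma tensor_sum_Cons [simp]: "tensor_sum n (c # cs) u = (\<Prod>i\<le>n. c i (u i)) + tensor_sum n cs u"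
  by (simp add: tensor_sum_def)

lemma tensor_sum_append: "tensor_sum n (cs @ ds) u = tensor_sum n cs u + tensor_sum n ds u"
  by (simp add: tensor_sum_def)

lemma tensor_sum_mult:
  "tensor_sum n cs u * tensor_sum n ds u = tensor_sum n [\<lambda>i t. c i t * d i t. c \<leftarrow> cs, d \<leftarrow> ds] u"
proof (induction cs)
  case (Cons c cs)
  have "(\<Prod>i\<le>n. c i (u i)) * tensor_sum n ds u = tensor_sum n [\<lambda>i t. c i t * d i t. d \<leftarrow> ds] u"
    by (induction ds) (simp_all add: prod.distrib algebra_simps)
  then show ?case
    using Cons by (simp add: tensor_sum_append algebra_simps)
qed simp

lemma continuous_on_tensor_sum:
  assumes "continuous_factors n J cs"
  shows "continuous_on (PiE {..n} J) (tensor_sum n cs)"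
  using assms
proof (induction cs)
  case (Cons c cs)
  have "continuous_on (PiE {..n} J) (\<lambda>u. c i (u i))" if "i \<le> n" for i
  proof -
    have "continuous_on (J i) (c i)"
      using Cons.prems that by (simp add: continuous_factors_def)
    from continuous_on_compose2[OF this continuous_on_subset[OF continuous_on_product_coordinates, of "PiE {..n} J" i]]
    show ?thesis
      using that by (auto simp: PiE_iff)
  qed
  then have "continuous_on (PiE {..n} J) (\<lambda>u. \<Prod>i\<le>n. c i (u i))"
    by (intro continuous_on_prod) auto
  moreover have "continuous_on (PiE {..n} J) (tensor_sum n cs)"
    using Cons by (simp add: continuous_factors_def)
  ultimately show ?case
    by (simp add: continuous_on_add)
qed (simp add: tensor_sum_def)

lemma tensor_sum_const: "tensor_sum n [\<lambda>i t. if i = 0 then a else 1] = (\<lambda>_. a)"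
  by (rule ext) (simp add: tensor_sum_def prod.delta)

lemma tensor_sum_coordinate: "i \<le> n \<Longrightarrow> tensor_sum n [\<lambda>i' t. if i' = i then t else 1] = (\<lambda>w. w i)"
  by (auto simp: tensor_sum_def prod.delta)

lemma continuous_factors_coordinate: "continuous_factors n J [\<lambda>i' t. if i' = i then t else 1]"
proof -
  have "continuous_on (J i') (\<lambda>t. if i' = i then t else 1)" for i'
    by (cases "i' = i") (simp_all add: continuous_on_id continuous_on_const)
  then show ?thesis
    by (simp add: continuous_factors_def)
qed

lemma function_ring_on_tensor_sums:
  assumes "\<And>i. i \<le> n \<Longrightarrow> compact (J i)"
  shows "function_ring_on {tensor_sum n cs |cs. continuous_factors n J cs} (PiE {..n} J)"
proof
  show "compact (PiE {..n} J)"
    using assms by (intro compact_PiE) auto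
next
  fix f assume "f \<in> {tensor_sum n cs |cs. continuous_factors n J cs}"
  then show "continuous_on (PiE {..n} J) f"
    using continuous_on_tensor_sum by blast
next
  fix f g
  assume "f \<in> {tensor_sum n cs |cs. continuous_factors n J cs}" "g \<in> {tensor_sum n cs |cs. continuous_factors n J cs}"
  then obtain cs ds where cs: "f = tensor_sum n cs" "continuous_factors n J cs"
    and ds: "g = tensor_sum n ds" "continuous_factors n J ds"
    by blast
  have "(\<lambda>x. f x + g x) = tensor_sum n (cs @ ds)" "continuous_factors n J (cs @ ds)"
    using cs ds by (auto simp: tensor_sum_append continuous_factors_def)
  then show "(\<lambda>x. f x + g x) \<in> {tensor_sum n cs |cs. continuous_factors n J cs}"
    by blast
  have "(\<lambda>x. f x * g x) = tensor_sum n [\<lambda>i t. c i t * d i t. c \<leftarrow> cs, d \<leftarrow> ds]"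
    "continuous_factors n J [\<lambda>i t. c i t * d i t. c \<leftarrow> cs, d \<leftarrow> ds]"
    using cs ds by (auto simp: tensor_sum_mult continuous_factors_def intro!: continuous_on_mult)
  then show "(\<lambda>x. f x * g x) \<in> {tensor_sum n cs |cs. continuous_factors n J cs}"
    by blast
next
  fix a :: real
  have "continuous_factors n J [\<lambda>i t. if i = 0 then a else 1]"
    by (auto simp: continuous_factors_def)
  then show "(\<lambda>_. a) \<in> {tensor_sum n cs |cs. continuous_factors n J cs}"
    using tensor_sum_const by force
next
  fix u v assume "u \<in> PiE {..n} J" "v \<in> PiE {..n} J" "u \<noteq> v"
  then obtain i where i: "i \<le> n" "u i \<noteq> v i"
    using PiE_ext by (metis atMost_iff)
  then have "\<exists>cs. (\<lambda>w. w i) = tensor_sum n cs \<and> continuous_factors n J cs"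
    using tensor_sum_coordinate continuous_factors_coordinate by metis
  then show "\<exists>f\<in>{tensor_sum n cs |cs. continuous_factors n J cs}. f u \<noteq> f v"
    using i(2) by (intro bexI[of _ "\<lambda>w. w i"]) simp_all
qed

lemma Stone_Weierstrass_tensor_sum:
  assumes "\<And>i. i \<le> n \<Longrightarrow> compact (J i)" "continuous_on (PiE {..n} J) F" "0 < e"
  obtains cs where "continuous_factors n J cs" "\<And>u. u \<in> PiE {..n} J \<Longrightarrow> \<bar>F u - tensor_sum n cs u\<bar> < e"
proof -
  interpret function_ring_on "{tensor_sum n cs |cs. continuous_factors n J cs}" "PiE {..n} J"
    using function_ring_on_tensor_sums assms(1) by blast
  show ?thesis
    using Stone_Weierstrass_basic[OF assms(2,3)] that by blast
qed

section \<open>Finite products of finite measures\<close>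

text \<open>The product-measure locales require every factor to be \<open>\<sigma>\<close>-finite; the factors outside the
  index set are irrelevant and are replaced by the null measure.\<close>
definition extend_measures :: "'i set \<Rightarrow> ('i \<Rightarrow> 'a measure) \<Rightarrow> 'i \<Rightarrow> 'a measure" where
  "extend_measures I M i = (if i \<in> I then M i else count_space {})"

lemma PiM_extend_measures [simp]: "PiM I (extend_measures I M) = PiM I M"
  unfolding extend_measures_def by (rule PiM_cong) auto

lemma product_sigma_finite_extend_measures:
  assumes "\<And>i. i \<in> I \<Longrightarrow> finite_measure (M i)"
  shows "product_sigma_finite (extend_measures I M)"
proof (rule product_sigma_finite.intro)
  fix i
  have "finite_measure (extend_measures I M i)"
    using assms by (simp add: extend_measures_def finite_measure_count_space)
  then show "sigma_finite_measure (extend_measures I M i)"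
    by (simp add: finite_measure_def)
qed

lemma finite_measure_PiM:
  assumes "finite I" "\<And>i. i \<in> I \<Longrightarrow> finite_measure (M i)"
  shows "finite_measure (PiM I M)"
proof -
  interpret product_sigma_finite "extend_measures I M"
    using product_sigma_finite_extend_measures assms(2) by blast
  interpret finite_product_sigma_finite "extend_measures I M" I
    by standard (rule assms(1))
  have "emeasure (PiM I (extend_measures I M)) (PiE I (\<lambda>i. space (extend_measures I M i)))
      = (\<Prod>i\<in>I. emeasure (extend_measures I M i) (space (extend_measures I M i)))"
    by (rule measure_times) simp
  also have "\<dots> \<noteq> \<infinity>"
    using assms(2) by (simp add: extend_measures_def ennreal_prod_eq_top finite_measure.emeasure_finite)
  finally have "emeasure (PiM I M) (space (PiM I M)) \<noteq> \<infinity>"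
    by (simp add: space_PiM extend_measures_def cong: PiE_cong)
  then show ?thesis
    by (rule finite_measureI)
qed

lemma
  fixes f :: "'i \<Rightarrow> 'a \<Rightarrow> real"
  assumes "finite I" "\<And>i. i \<in> I \<Longrightarrow> finite_measure (M i)" "\<And>i. i \<in> I \<Longrightarrow> integrable (M i) (f i)"
  shows integrable_PiM_prod: "integrable (PiM I M) (\<lambda>x. \<Prod>i\<in>I. f i (x i))"
    and integral_PiM_prod: "(\<integral>x. (\<Prod>i\<in>I. f i (x i)) \<partial>PiM I M) = (\<Prod>i\<in>I. integral\<^sup>L (M i) (f i))"
proof -
  interpret product_sigma_finite "extend_measures I M"
    using product_sigma_finite_extend_measures assms(2) by blast
  show "integrable (PiM I M) (\<lambda>x. \<Prod>i\<in>I. f i (x i))"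
    using product_integrable_prod[of I f] assms by (simp add: extend_measures_def)
  show "(\<integral>x. (\<Prod>i\<in>I. f i (x i)) \<partial>PiM I M) = (\<Prod>i\<in>I. integral\<^sup>L (M i) (f i))"
    using product_integral_prod[of I f] assms by (simp add: extend_measures_def)
qed

lemma integral_PiM_insert_swap:
  fixes f :: "('i \<Rightarrow> 'a) \<Rightarrow> real"
  assumes I: "finite I" "i \<notin> I" and fin: "\<And>j. j \<in> insert i I \<Longrightarrow> finite_measure (M j)"
    and f: "integrable (PiM (insert i I) M) f"
  shows "integral\<^sup>L (PiM (insert i I) M) f = (\<integral>y. (\<integral>x. f (x(i := y)) \<partial>PiM I M) \<partial>M i)"
proof -
  let ?N = "extend_measures (insert i I) M"
  interpret product_sigma_finite ?N
    using product_sigma_finite_extend_measures fin by blast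
  interpret IP: finite_product_sigma_finite ?N I
    by standard (rule I(1))
  interpret P: pair_sigma_finite "PiM I ?N" "?N i"
    by (intro pair_sigma_finite.intro IP.sigma_finite_measure_axioms sigma_finite_measures)
  have PiM_N: "PiM I ?N = PiM I M"
    unfolding extend_measures_def by (rule PiM_cong) auto
  have fN: "integrable (PiM (insert i I) ?N) f"
    using f by simp
  then have f_meas: "f \<in> borel_measurable (PiM (insert i I) ?N)"
    by auto
  have meas: "(\<lambda>(x, y). f (x(i := y))) \<in> borel_measurable (PiM I ?N \<Otimes>\<^sub>M ?N i)"
    using measurable_comp[OF measurable_add_dim f_meas] by (simp add: comp_def case_prod_beta)
  have "integrable (PiM I ?N \<Otimes>\<^sub>M ?N i) (\<lambda>(x, y). f (x(i := y)))"
  proof (subst integrable_iff_bounded, intro conjI meas)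
    have "(\<integral>\<^sup>+ z. ennreal (norm (case z of (x, y) \<Rightarrow> f (x(i := y)))) \<partial>(PiM I ?N \<Otimes>\<^sub>M ?N i))
        = (\<integral>\<^sup>+ x. \<integral>\<^sup>+ y. ennreal (norm (f (x(i := y)))) \<partial>?N i \<partial>PiM I ?N)"
      using sigma_finite_measure.nn_integral_fst[OF sigma_finite_measures,
          OF measurable_compose[OF meas, of "\<lambda>v. ennreal (norm v)" borel]]
      by simp
    also have "\<dots> = (\<integral>\<^sup>+ x. ennreal (norm (f x)) \<partial>PiM (insert i I) ?N)"
      by (rule product_nn_integral_insert[symmetric]) (use I f_meas in auto)
    also have "\<dots> < \<infinity>"
      using fN by (simp add: integrable_iff_bounded)
    finally show "(\<integral>\<^sup>+ z. ennreal (norm (case z of (x, y) \<Rightarrow> f (x(i := y)))) \<partial>(PiM I ?N \<Otimes>\<^sub>M ?N i)) < \<infinity>" .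
  qed
  then have "(\<integral>x. (\<integral>y. f (x(i := y)) \<partial>?N i) \<partial>PiM I ?N) = (\<integral>y. (\<integral>x. f (x(i := y)) \<partial>PiM I ?N) \<partial>?N i)"
    by (rule P.Fubini_integral[symmetric])
  then show ?thesis
    using product_integral_insert[OF I fN] PiM_N by (simp add: extend_measures_def)
qed

lemma measurable_fun_upd_PiM:
  assumes "j \<in> I"
  shows "(\<lambda>u. u(j := t)) \<in> measurable (PiM (I - {j}) M) (PiM I (M(j := borel)))"
proof -
  have I: "insert j (I - {j}) = I"
    using assms by auto
  have P: "PiM (I - {j}) (M(j := borel)) = PiM (I - {j}) M"
    by (rule PiM_cong) auto
  have "(\<lambda>u. (u, t)) \<in> measurable (PiM (I - {j}) (M(j := borel)))
      (PiM (I - {j}) (M(j := borel)) \<Otimes>\<^sub>M (M(j := borel)) j)"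
    by (rule measurable_Pair) auto
  from measurable_comp[OF this measurable_add_dim[where I="I - {j}" and M="M(j := borel)" and i=j]]
  show ?thesis
    unfolding I P by (simp add: comp_def)
qed

section \<open>Box integrals and section integrals\<close>

definition box_integral :: "nat \<Rightarrow> (nat \<Rightarrow> real set) \<Rightarrow> (nat \<Rightarrow> real measure) \<Rightarrow> ((nat \<Rightarrow> real) \<Rightarrow> real) \<Rightarrow> real" where
  "box_integral n J M F = set_lebesgue_integral (PiM {..n} M) (PiE {..n} J) F"

definition section_integral :: "nat \<Rightarrow> (nat \<Rightarrow> real set) \<Rightarrow> (nat \<Rightarrow> real measure) \<Rightarrow> nat
    \<Rightarrow> ((nat \<Rightarrow> real) \<Rightarrow> real) \<Rightarrow> real \<Rightarrow> real" where
  "section_integral n J M j F t =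
     (\<integral>u. indicator (PiE {..n} J) (u(j := t)) * F (u(j := t)) \<partial>PiM ({..n} - {j}) M)"

lemma box_integral_cong:
  "(\<And>i. i \<le> n \<Longrightarrow> M i = M' i) \<Longrightarrow> box_integral n J M F = box_integral n J M' F"
  unfolding box_integral_def by (subst PiM_cong[of "{..n}" "{..n}" M M']) auto

lemma section_integral_cong:
  "(\<And>i. i \<le> n \<Longrightarrow> i \<noteq> j \<Longrightarrow> M i = M' i) \<Longrightarrow> section_integral n J M j F = section_integral n J M' j F"
  unfolding section_integral_def by (subst PiM_cong[of "{..n} - {j}" "{..n} - {j}" M M']) auto

text \<open>As \<open>j\<close> runs from \<open>0\<close> to \<open>n + 1\<close>, the factors \<open>hybrid M1 M0 j\<close> pass from \<open>M0\<close> to \<open>M1\<close>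
  one coordinate at a time.\<close>
definition hybrid :: "(nat \<Rightarrow> 'a measure) \<Rightarrow> (nat \<Rightarrow> 'a measure) \<Rightarrow> nat \<Rightarrow> nat \<Rightarrow> 'a measure" where
  "hybrid M1 M0 j i = (if i < j then M1 i else M0 i)"

context
  fixes n :: nat and J :: "nat \<Rightarrow> real set"
  assumes compact_J: "\<And>i. i \<le> n \<Longrightarrow> compact (J i)"
begin

lemma indicator_times_tensor_sum:
  assumes "u \<in> extensional {..n}"
  shows "indicator (PiE {..n} J) u * tensor_sum n cs u = (\<Sum>c\<leftarrow>cs. \<Prod>i\<le>n. indicator (J i) (u i) * c i (u i))"
  unfolding indicator_PiE[OF finite_atMost assms] tensor_sum_def
  by (induction cs) (simp_all add: prod.distrib algebra_simps)

lemma borel_measurable_indicator_tensor_sum: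
  assumes M: "\<And>i. i \<le> n \<Longrightarrow> sets (M i) = sets borel" and cs: "continuous_factors n J cs"
  shows "(\<lambda>u. indicator (PiE {..n} J) u * tensor_sum n cs u) \<in> borel_measurable (PiM {..n} M)"
proof -
  have factor: "(\<lambda>u. indicator (J i) (u i) * c (u i)) \<in> borel_measurable (PiM {..n} M)"
    if "i \<le> n" "continuous_on (J i) c" for i and c :: "real \<Rightarrow> real"
  proof -
    have "(\<lambda>t. indicator (J i) t *\<^sub>R c t) \<in> borel_measurable borel"
      using compact_imp_closed[OF compact_J[OF that(1)]] that(2)
      by (intro borel_measurable_continuous_on_indicator borel_closed)
    then have "(\<lambda>t. indicator (J i) t * c t) \<in> borel_measurable (M i)"
      by (simp add: measurable_cong_sets[OF M[OF that(1)] refl])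
    then show ?thesis
      using measurable_compose[OF measurable_component_singleton[of i "{..n}" M]] that(1) by simp
  qed
  have "(\<lambda>u. \<Sum>c\<leftarrow>cs. \<Prod>i\<le>n. indicator (J i) (u i) * c i (u i)) \<in> borel_measurable (PiM {..n} M)"
    using cs
  proof (induction cs)
    case (Cons c cs)
    then have "(\<lambda>u. \<Prod>i\<le>n. indicator (J i) (u i) * c i (u i)) \<in> borel_measurable (PiM {..n} M)"
      by (intro borel_measurable_prod factor) (auto simp: continuous_factors_def)
    then show ?case
      using Cons by (simp add: continuous_factors_def)
  qed simp
  then show ?thesis
    by (rule measurable_cong[THEN iffD1, rotated]) (simp add: indicator_times_tensor_sum space_PiM PiE_iff)
qed

lemma borel_measurable_indicator_continuous:
  fixes F :: "(nat \<Rightarrow> real) \<Rightarrow> real"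
  assumes M: "\<And>i. i \<le> n \<Longrightarrow> sets (M i) = sets borel" and F: "continuous_on (PiE {..n} J) F"
  shows "(\<lambda>u. indicator (PiE {..n} J) u * F u) \<in> borel_measurable (PiM {..n} M)"
proof -
  have "\<exists>cs. continuous_factors n J cs \<and> (\<forall>u\<in>PiE {..n} J. \<bar>F u - tensor_sum n cs u\<bar> < 1 / Suc m)" for m
  proof -
    have "0 < 1 / real (Suc m)" by simp
    from Stone_Weierstrass_tensor_sum[OF compact_J F this] show ?thesis by metis
  qed
  then obtain cs where cs: "\<And>m. continuous_factors n J (cs m)"
    "\<And>m u. u \<in> PiE {..n} J \<Longrightarrow> \<bar>F u - tensor_sum n (cs m) u\<bar> < 1 / Suc m"
    by metis
  show ?thesis
  proof (rule borel_measurable_LIMSEQ_real[where u="\<lambda>m u. indicator (PiE {..n} J) u * tensor_sum n (cs m) u"])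
    fix u assume "u \<in> space (PiM {..n} M)"
    show "(\<lambda>m. indicator (PiE {..n} J) u * tensor_sum n (cs m) u) \<longlonglongrightarrow> indicator (PiE {..n} J) u * F u"
    proof (cases "u \<in> PiE {..n} J")
      case True
      have "(\<lambda>m. tensor_sum n (cs m) u) \<longlonglongrightarrow> F u"
      proof (rule LIMSEQ_I)
        fix r :: real assume "0 < r"
        then obtain N :: nat where N: "1 / Suc N < r"
          by (metis nat_approx_posE)
        have "norm (tensor_sum n (cs m) u - F u) < r" if "N \<le> m" for m
        proof -
          have "1 / real (Suc m) \<le> 1 / Suc N"
            using that by (simp add: frac_le)
          then show ?thesis
            using cs(2)[OF True, of m] N by (simp add: abs_minus_commute)
        qed
        then show "\<exists>N. \<forall>m\<ge>N. norm (tensor_sum n (cs m) u - F u) < r"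
          by blast
      qed
      then show ?thesis
        using True by simp
    qed simp
  qed (rule borel_measurable_indicator_tensor_sum[OF M cs(1)])
qed

lemma compact_box: "compact (PiE {..n} J)"
  using compact_J by (intro compact_PiE) auto

lemma integrable_indicator_continuous:
  fixes F :: "(nat \<Rightarrow> real) \<Rightarrow> real"
  assumes M: "\<And>i. i \<le> n \<Longrightarrow> finite_measure (M i) \<and> sets (M i) = sets borel"
    and F: "continuous_on (PiE {..n} J) F"
  shows "integrable (PiM {..n} M) (\<lambda>u. indicator (PiE {..n} J) u * F u)"
proof -
  interpret finite_measure "PiM {..n} M"
    using finite_measure_PiM[of "{..n}" M] M by auto
  obtain B where "B \<ge> 0" "\<And>u. u \<in> PiE {..n} J \<Longrightarrow> norm (F u) \<le> B"
    using continuous_on_compact_bound[OF compact_box F] by blast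
  then have "AE u in PiM {..n} M. norm (indicator (PiE {..n} J) u * F u) \<le> B"
    by (auto simp: indicator_def)
  moreover have "(\<lambda>u. indicator (PiE {..n} J) u * F u) \<in> borel_measurable (PiM {..n} M)"
    using M by (intro borel_measurable_indicator_continuous F) auto
  ultimately show ?thesis
    by (rule integrable_const_bound)
qed

lemma integrable_section:
  fixes F :: "(nat \<Rightarrow> real) \<Rightarrow> real"
  assumes j: "j \<le> n" and M: "\<And>i. i \<le> n \<Longrightarrow> i \<noteq> j \<Longrightarrow> finite_measure (M i) \<and> sets (M i) = sets borel"
    and F: "continuous_on (PiE {..n} J) F"
  shows "integrable (PiM ({..n} - {j}) M) (\<lambda>u. indicator (PiE {..n} J) (u(j := t)) * F (u(j := t)))"
proof -
  interpret finite_measure "PiM ({..n} - {j}) M"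
    using finite_measure_PiM[of "{..n} - {j}" M] M by auto
  obtain B where "B \<ge> 0" "\<And>u. u \<in> PiE {..n} J \<Longrightarrow> norm (F u) \<le> B"
    using continuous_on_compact_bound[OF compact_box F] by blast
  then have "AE u in PiM ({..n} - {j}) M. norm (indicator (PiE {..n} J) (u(j := t)) * F (u(j := t))) \<le> B"
    by (auto simp: indicator_def)
  moreover have "(\<lambda>u. indicator (PiE {..n} J) u * F u) \<in> borel_measurable (PiM {..n} (M(j := borel)))"
    using M by (intro borel_measurable_indicator_continuous F) auto
  then have "(\<lambda>u. indicator (PiE {..n} J) (u(j := t)) * F (u(j := t))) \<in> borel_measurable (PiM ({..n} - {j}) M)"
    using measurable_comp[OF measurable_fun_upd_PiM[of j "{..n}" t M]] j by (simp add: comp_def)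
  ultimately show ?thesis
    by (rule integrable_const_bound)
qed

lemma abs_section_integral_diff_le:
  fixes F G :: "(nat \<Rightarrow> real) \<Rightarrow> real"
  assumes j: "j \<le> n" "t \<in> J j" "t' \<in> J j"
    and M: "\<And>i. i \<le> n \<Longrightarrow> i \<noteq> j \<Longrightarrow> prob_space (M i) \<and> sets (M i) = sets borel"
    and F: "continuous_on (PiE {..n} J) F" and G: "continuous_on (PiE {..n} J) G"
    and "0 \<le> c" and FG: "\<And>w. w \<in> PiE {..n} J \<Longrightarrow> \<bar>F (w(j := t)) - G (w(j := t'))\<bar> \<le> c"
  shows "\<bar>section_integral n J M j F t - section_integral n J M j G t'\<bar> \<le> c"
proof -
  interpret P: prob_space "PiM ({..n} - {j}) M"
    using M by (intro prob_space_PiM) auto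
  have M': "\<And>i. i \<le> n \<Longrightarrow> i \<noteq> j \<Longrightarrow> finite_measure (M i) \<and> sets (M i) = sets borel"
    using M prob_space.finite_measure by blast
  let ?f = "\<lambda>u. indicator (PiE {..n} J) (u(j := t)) * F (u(j := t))
    - indicator (PiE {..n} J) (u(j := t')) * G (u(j := t'))"
  have int: "integrable (PiM ({..n} - {j}) M) ?f"
    using integrable_section[OF j(1) M' F] integrable_section[OF j(1) M' G] by auto
  have "section_integral n J M j F t - section_integral n J M j G t' = integral\<^sup>L (PiM ({..n} - {j}) M) ?f"
    using integrable_section[OF j(1) M' F] integrable_section[OF j(1) M' G]
    unfolding section_integral_def by simp
  also have "\<bar>\<dots>\<bar> \<le> (\<integral>u. c \<partial>PiM ({..n} - {j}) M)"
  proof (rule abs_integral_le_integral[OF int])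
    fix u
    have ind: "indicator (PiE {..n} J) (u(j := t)) = (indicator (PiE {..n} J) (u(j := t')) :: real)"
      using j by (intro indicator_PiE_fun_upd) auto
    show "\<bar>?f u\<bar> \<le> c"
    proof (cases "u(j := t') \<in> PiE {..n} J")
      case True
      then show ?thesis
        using FG[OF True] ind by simp
    qed (use ind \<open>0 \<le> c\<close> in simp)
  qed simp
  also have "\<dots> = c"
    by (simp add: P.prob_space)
  finally show ?thesis .
qed

lemma continuous_on_section_integral:
  fixes F :: "(nat \<Rightarrow> real) \<Rightarrow> real"
  assumes j: "j \<le> n" and M: "\<And>i. i \<le> n \<Longrightarrow> i \<noteq> j \<Longrightarrow> prob_space (M i) \<and> sets (M i) = sets borel"
    and F: "continuous_on (PiE {..n} J) F"
  shows "continuous_on (J j) (section_integral n J M j F)"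
  unfolding continuous_on_iff
proof (intro ballI allI impI)
  fix t0 e :: real assume t0: "t0 \<in> J j" and "0 < e"
  then obtain d where "d > 0" and d: "\<And>u t. u \<in> PiE {..n} J \<Longrightarrow> u(j := t) \<in> PiE {..n} J \<Longrightarrow>
      dist t (u j) < d \<Longrightarrow> dist (F (u(j := t))) (F u) < e / 2"
    using uniformly_continuous_on_fun_upd[OF compact_box F, of "e / 2"] by (metis half_gt_zero)
  have "dist (section_integral n J M j F t) (section_integral n J M j F t0) < e"
    if t: "t \<in> J j" "dist t t0 < d" for t
  proof -
    have "\<bar>section_integral n J M j F t - section_integral n J M j F t0\<bar> \<le> e / 2"
    proof (rule abs_section_integral_diff_le[OF j t(1) t0 M F F])
      fix w assume w: "w \<in> PiE {..n} J"
      have "dist (F ((w(j := t0))(j := t))) (F (w(j := t0))) < e / 2"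
        using j t t0 w by (intro d) (auto intro: fun_upd_in_PiE)
      then show "\<bar>F (w(j := t)) - F (w(j := t0))\<bar> \<le> e / 2"
        by (simp add: dist_real_def)
    qed (use \<open>0 < e\<close> in auto)
    then show ?thesis
      using \<open>0 < e\<close> by (simp add: dist_real_def)
  qed
  then show "\<exists>d>0. \<forall>t\<in>J j. dist t t0 < d \<longrightarrow> dist (section_integral n J M j F t) (section_integral n J M j F t0) < e"
    using \<open>d > 0\<close> by blast
qed

lemma box_integral_eq_set_integral_section:
  fixes F :: "(nat \<Rightarrow> real) \<Rightarrow> real"
  assumes j: "j \<le> n" and M: "\<And>i. i \<le> n \<Longrightarrow> finite_measure (M i) \<and> sets (M i) = sets borel"
    and F: "continuous_on (PiE {..n} J) F"
  shows "box_integral n J M F = set_lebesgue_integral (M j) (J j) (section_integral n J M j F)"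
proof -
  have ins: "insert j ({..n} - {j}) = {..n}"
    using j by auto
  have "box_integral n J M F = integral\<^sup>L (PiM (insert j ({..n} - {j})) M) (\<lambda>u. indicator (PiE {..n} J) u * F u)"
    unfolding box_integral_def set_lebesgue_integral_def ins by simp
  also have "\<dots> = (\<integral>t. (\<integral>u. indicator (PiE {..n} J) (u(j := t)) * F (u(j := t)) \<partial>PiM ({..n} - {j}) M) \<partial>M j)"
  proof (rule integral_PiM_insert_swap)
    show "integrable (PiM (insert j ({..n} - {j})) M) (\<lambda>u. indicator (PiE {..n} J) u * F u)"
      unfolding ins by (rule integrable_indicator_continuous[OF M F])
  qed (use M ins in auto)
  also have "\<dots> = set_lebesgue_integral (M j) (J j) (section_integral n J M j F)"
    unfolding set_lebesgue_integral_def section_integral_def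
  proof (rule Bochner_Integration.integral_cong[OF refl])
    fix t
    have "indicator (PiE {..n} J) (u(j := t)) = (0::real)" if "t \<notin> J j" for u
      using j that by (auto simp: indicator_def PiE_iff)
    then show "(\<integral>u. indicator (PiE {..n} J) (u(j := t)) * F (u(j := t)) \<partial>PiM ({..n} - {j}) M) =
        indicator (J j) t *\<^sub>R (\<integral>u. indicator (PiE {..n} J) (u(j := t)) * F (u(j := t)) \<partial>PiM ({..n} - {j}) M)"
      by (cases "t \<in> J j") simp_all
  qed
  finally show ?thesis .
qed

lemma abs_section_integral_linear_approx_le:
  fixes F D :: "(nat \<Rightarrow> real) \<Rightarrow> real"
  assumes j: "j \<le> n" "t \<in> J j" "t0 \<in> J j"
    and M: "\<And>i. i \<le> n \<Longrightarrow> i \<noteq> j \<Longrightarrow> prob_space (M i) \<and> sets (M i) = sets borel"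
    and F: "continuous_on (PiE {..n} J) F" and D: "continuous_on (PiE {..n} J) D" and "0 \<le> c"
    and bound: "\<And>w. w \<in> PiE {..n} J \<Longrightarrow> w j = t0 \<Longrightarrow> \<bar>F (w(j := t)) - F w - (t - t0) * D w\<bar> \<le> c"
  shows "\<bar>section_integral n J M j F t - section_integral n J M j F t0 - section_integral n J M j D t0 * (t - t0)\<bar> \<le> c"
proof -
  interpret P: prob_space "PiM ({..n} - {j}) M"
    using M by (intro prob_space_PiM) auto
  have M': "\<And>i. i \<le> n \<Longrightarrow> i \<noteq> j \<Longrightarrow> finite_measure (M i) \<and> sets (M i) = sets borel"
    using M prob_space.finite_measure by blast
  let ?ind = "\<lambda>u s. indicator (PiE {..n} J) (u(j := s)) :: real"
  let ?f = "\<lambda>u. ?ind u t * F (u(j := t)) - ?ind u t0 * F (u(j := t0)) - (t - t0) * (?ind u t0 * D (u(j := t0)))"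
  have int: "integrable (PiM ({..n} - {j}) M) (\<lambda>u. ?ind u t * F (u(j := t)))"
    "integrable (PiM ({..n} - {j}) M) (\<lambda>u. ?ind u t0 * F (u(j := t0)))"
    "integrable (PiM ({..n} - {j}) M) (\<lambda>u. ?ind u t0 * D (u(j := t0)))"
    using integrable_section[OF j(1) M' F] integrable_section[OF j(1) M' D] by auto
  have eq: "section_integral n J M j F t - section_integral n J M j F t0 - section_integral n J M j D t0 * (t - t0)
      = integral\<^sup>L (PiM ({..n} - {j}) M) ?f"
    using int unfolding section_integral_def by (simp add: algebra_simps)
  have "\<bar>integral\<^sup>L (PiM ({..n} - {j}) M) ?f\<bar> \<le> (\<integral>u. c \<partial>PiM ({..n} - {j}) M)"
  proof (rule abs_integral_le_integral)
    show "integrable (PiM ({..n} - {j}) M) ?f"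
      using int by (intro Bochner_Integration.integrable_diff integrable_mult_right)
    fix u
    have ind: "?ind u t = ?ind u t0"
      using j by (intro indicator_PiE_fun_upd) auto
    show "\<bar>?f u\<bar> \<le> c"
    proof (cases "u(j := t0) \<in> PiE {..n} J")
      case True
      then show ?thesis
        using bound[OF True] ind by (simp add: algebra_simps)
    qed (use ind \<open>0 \<le> c\<close> in simp)
  qed simp
  then show ?thesis
    unfolding eq by (simp add: P.prob_space)
qed

lemma section_integral_has_derivative:
  fixes F D :: "(nat \<Rightarrow> real) \<Rightarrow> real"
  assumes j: "j \<le> n" "convex (J j)"
    and M: "\<And>i. i \<le> n \<Longrightarrow> i \<noteq> j \<Longrightarrow> prob_space (M i) \<and> sets (M i) = sets borel"
    and F: "continuous_on (PiE {..n} J) F" and D: "continuous_on (PiE {..n} J) D"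
    and dF: "\<And>u. u \<in> PiE {..n} J \<Longrightarrow> ((\<lambda>t. F (u(j := t))) has_real_derivative D u) (at (u j) within J j)"
    and t0: "t0 \<in> J j"
  shows "(section_integral n J M j F has_real_derivative section_integral n J M j D t0) (at t0 within J j)"
  unfolding has_field_derivative_def has_derivative_within_alt
proof (intro conjI allI impI bounded_linear_mult_right)
  fix e :: real assume "0 < e"
  then obtain d where "d > 0" and d: "\<And>u t. u \<in> PiE {..n} J \<Longrightarrow> u(j := t) \<in> PiE {..n} J \<Longrightarrow>
      dist t (u j) < d \<Longrightarrow> dist (D (u(j := t))) (D u) < e"
    using uniformly_continuous_on_fun_upd[OF compact_box D] by metis
  have "\<bar>section_integral n J M j F t - section_integral n J M j F t0 - section_integral n J M j D t0 * (t - t0)\<bar>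
      \<le> e * \<bar>t - t0\<bar>" if t: "t \<in> J j" "\<bar>t - t0\<bar> < d" for t
  proof (rule abs_section_integral_linear_approx_le[OF j(1) t(1) t0 M F D])
    fix w assume w: "w \<in> PiE {..n} J" "w j = t0"
    have upd: "w(j := s) \<in> PiE {..n} J" if "s \<in> J j" for s
      using fun_upd_in_PiE[OF w(1) _ that] j by simp
    show "\<bar>F (w(j := t)) - F w - (t - t0) * D w\<bar> \<le> e * \<bar>t - t0\<bar>"
    proof (rule abs_linear_approx_le[OF j(2) t0 t(1), where f="\<lambda>s. F (w(j := s))" and f'="\<lambda>s. D (w(j := s))",
          unfolded fun_upd_triv[of w j, unfolded w(2)]])
      show "((\<lambda>s. F (w(j := s))) has_real_derivative D (w(j := s))) (at s within J j)" if "s \<in> J j" for s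
        using dF[OF upd[OF that]] by simp
      fix s assume s: "s \<in> closed_segment t0 t"
      then have "dist (D (w(j := s))) (D w) < e"
        using closed_segment_subset[OF t0 t(1) j(2)] t(2) w
        by (intro d upd) (auto simp: closed_segment_eq_real_ivl dist_real_def split: if_splits)
      then show "\<bar>D (w(j := s)) - D w\<bar> \<le> e"
        by (simp add: dist_real_def)
    qed
  qed (use \<open>0 < e\<close> in auto)
  then show "\<exists>d>0. \<forall>t\<in>J j. norm (t - t0) < d \<longrightarrow>
      norm (section_integral n J M j F t - section_integral n J M j F t0 - section_integral n J M j D t0 * (t - t0))
      \<le> e * norm (t - t0)"
    using \<open>d > 0\<close> by auto
qed

lemma indicator_times_tensor_sum_fun_upd:
  assumes j: "j \<le> n" "t \<in> J j" and u: "u \<in> extensional ({..n} - {j})"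
  shows "indicator (PiE {..n} J) (u(j := t)) * tensor_sum n cs (u(j := t))
    = (\<Sum>c\<leftarrow>cs. c j t * (\<Prod>i\<in>{..n} - {j}. indicator (J i) (u i) * c i (u i)))"
proof -
  have "u(j := t) \<in> extensional {..n}"
    using u j by (auto simp: extensional_def)
  then have "indicator (PiE {..n} J) (u(j := t)) * tensor_sum n cs (u(j := t))
      = (\<Sum>c\<leftarrow>cs. \<Prod>i\<le>n. indicator (J i) ((u(j := t)) i) * c i ((u(j := t)) i))"
    by (rule indicator_times_tensor_sum)
  also have "\<dots> = (\<Sum>c\<leftarrow>cs. c j t * (\<Prod>i\<in>{..n} - {j}. indicator (J i) (u i) * c i (u i)))"
  proof (intro arg_cong[where f=sum_list] map_cong refl)
    fix c :: "nat \<Rightarrow> real \<Rightarrow> real"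
    have "(\<Prod>i\<le>n. indicator (J i) ((u(j := t)) i) * c i ((u(j := t)) i))
        = (indicator (J j) t * c j t) * (\<Prod>i\<in>{..n} - {j}. indicator (J i) ((u(j := t)) i) * c i ((u(j := t)) i))"
      using j by (subst prod.remove[of _ j]) auto
    also have "(\<Prod>i\<in>{..n} - {j}. indicator (J i) ((u(j := t)) i) * c i ((u(j := t)) i))
        = (\<Prod>i\<in>{..n} - {j}. indicator (J i) (u i) * c i (u i))"
      by (rule prod.cong) auto
    finally show "(\<Prod>i\<le>n. indicator (J i) ((u(j := t)) i) * c i ((u(j := t)) i))
        = c j t * (\<Prod>i\<in>{..n} - {j}. indicator (J i) (u i) * c i (u i))"
      using j by simp
  qed
  finally show ?thesis .
qed

lemma section_integral_tensor_sum:
  assumes j: "j \<le> n" "t \<in> J j"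
    and M: "\<And>i. i \<le> n \<Longrightarrow> i \<noteq> j \<Longrightarrow> finite_measure (M i) \<and> sets (M i) = sets borel"
    and cs: "continuous_factors n J cs"
  shows "section_integral n J M j (tensor_sum n cs) t
       = (\<Sum>c\<leftarrow>cs. c j t * (\<Prod>i\<in>{..n} - {j}. set_lebesgue_integral (M i) (J i) (c i)))"
proof -
  let ?P = "\<lambda>c u. \<Prod>i\<in>{..n} - {j}. indicator (J i) (u i) * c i (u i)"
  have P: "integrable (PiM ({..n} - {j}) M) (?P c)"
    "(\<integral>u. ?P c u \<partial>PiM ({..n} - {j}) M) = (\<Prod>i\<in>{..n} - {j}. set_lebesgue_integral (M i) (J i) (c i))"
    if "c \<in> set cs" for c
  proof -
    have fact: "integrable (M i) (\<lambda>s. indicator (J i) s * c i s)"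
      "(\<integral>s. indicator (J i) s * c i s \<partial>M i) = set_lebesgue_integral (M i) (J i) (c i)"
      if "i \<in> {..n} - {j}" for i
      using set_integral_eq_integral_indicator[of "M i" "J i" "c i"] M compact_J cs \<open>c \<in> set cs\<close> that
      by (auto simp: continuous_factors_def)
    show "integrable (PiM ({..n} - {j}) M) (?P c)"
      using M fact by (intro integrable_PiM_prod[where f="\<lambda>i s. indicator (J i) s * c i s", simplified]) auto
    show "(\<integral>u. ?P c u \<partial>PiM ({..n} - {j}) M) = (\<Prod>i\<in>{..n} - {j}. set_lebesgue_integral (M i) (J i) (c i))"
      using M fact by (subst integral_PiM_prod[where f="\<lambda>i s. indicator (J i) s * c i s", simplified]) auto
  qed
  have "indicator (PiE {..n} J) (u(j := t)) * tensor_sum n cs (u(j := t)) = (\<Sum>c\<leftarrow>cs. c j t * ?P c u)"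
    if "u \<in> space (PiM ({..n} - {j}) M)" for u
    using that j by (intro indicator_times_tensor_sum_fun_upd) (auto simp: space_PiM PiE_def)
  then have "section_integral n J M j (tensor_sum n cs) t = (\<integral>u. (\<Sum>c\<leftarrow>cs. c j t * ?P c u) \<partial>PiM ({..n} - {j}) M)"
    unfolding section_integral_def by (intro Bochner_Integration.integral_cong) auto
  also have "\<dots> = (\<Sum>c\<leftarrow>cs. \<integral>u. c j t * ?P c u \<partial>PiM ({..n} - {j}) M)"
    using P(1) by (intro integral_sum_list(1) integrable_mult_right)
  finally show ?thesis
    using P(2) by (simp cong: map_cong)
qed

lemma uniform_limit_section_integral_tensor_sum:
  fixes Mh :: "'a \<Rightarrow> nat \<Rightarrow> real measure"
  assumes j: "j \<le> n" and cs: "continuous_factors n J cs"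
    and Mh: "\<forall>\<^sub>F h in Fl. \<forall>i\<le>n. i \<noteq> j \<longrightarrow> finite_measure (Mh h i) \<and> sets (Mh h i) = sets borel"
    and M0: "\<And>i. i \<le> n \<Longrightarrow> i \<noteq> j \<Longrightarrow> finite_measure (M0 i) \<and> sets (M0 i) = sets borel"
    and conv: "\<And>i (f :: real \<Rightarrow> real). i \<le> n \<Longrightarrow> i \<noteq> j \<Longrightarrow> continuous_on (J i) f \<Longrightarrow>
      ((\<lambda>h. set_lebesgue_integral (Mh h i) (J i) f) \<longlongrightarrow> set_lebesgue_integral (M0 i) (J i) f) Fl"
  shows "uniform_limit (J j) (\<lambda>h. section_integral n J (Mh h) j (tensor_sum n cs))
    (section_integral n J M0 j (tensor_sum n cs)) Fl"
proof -
  have "uniform_limit (J j)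
      (\<lambda>h t. \<Sum>c\<leftarrow>cs. c j t * (\<Prod>i\<in>{..n} - {j}. set_lebesgue_integral (Mh h i) (J i) (c i)))
      (\<lambda>t. \<Sum>c\<leftarrow>cs. c j t * (\<Prod>i\<in>{..n} - {j}. set_lebesgue_integral (M0 i) (J i) (c i))) Fl"
  proof (rule uniform_limit_sum_list_scaled)
    fix c assume c: "c \<in> set cs"
    show "continuous_on (J j) (c j)"
      using cs c j by (simp add: continuous_factors_def)
    show "((\<lambda>h. \<Prod>i\<in>{..n} - {j}. set_lebesgue_integral (Mh h i) (J i) (c i))
        \<longlongrightarrow> (\<Prod>i\<in>{..n} - {j}. set_lebesgue_integral (M0 i) (J i) (c i))) Fl"
    proof (rule tendsto_prod)
      fix i assume "i \<in> {..n} - {j}"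
      then show "((\<lambda>h. set_lebesgue_integral (Mh h i) (J i) (c i)) \<longlongrightarrow> set_lebesgue_integral (M0 i) (J i) (c i)) Fl"
        using cs c by (intro conv) (auto simp: continuous_factors_def)
    qed
  qed (rule compact_J[OF j])
  moreover have "\<forall>\<^sub>F h in Fl. \<forall>t\<in>J j. section_integral n J (Mh h) j (tensor_sum n cs) t
      = (\<Sum>c\<leftarrow>cs. c j t * (\<Prod>i\<in>{..n} - {j}. set_lebesgue_integral (Mh h i) (J i) (c i)))"
    using Mh by eventually_elim (use j cs in \<open>auto intro: section_integral_tensor_sum\<close>)
  moreover have "section_integral n J M0 j (tensor_sum n cs) t
      = (\<Sum>c\<leftarrow>cs. c j t * (\<Prod>i\<in>{..n} - {j}. set_lebesgue_integral (M0 i) (J i) (c i)))" if "t \<in> J j" for t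
    using M0 j cs that by (intro section_integral_tensor_sum) auto
  ultimately show ?thesis
    by (subst uniform_limit_cong) auto
qed

lemma uniform_limit_section_integral:
  fixes Mh :: "'a \<Rightarrow> nat \<Rightarrow> real measure" and F :: "(nat \<Rightarrow> real) \<Rightarrow> real"
  assumes j: "j \<le> n" and F: "continuous_on (PiE {..n} J) F"
    and Mh: "\<forall>\<^sub>F h in Fl. \<forall>i\<le>n. i \<noteq> j \<longrightarrow> prob_space (Mh h i) \<and> sets (Mh h i) = sets borel"
    and M0: "\<And>i. i \<le> n \<Longrightarrow> i \<noteq> j \<Longrightarrow> prob_space (M0 i) \<and> sets (M0 i) = sets borel"
    and conv: "\<And>i (f :: real \<Rightarrow> real). i \<le> n \<Longrightarrow> i \<noteq> j \<Longrightarrow> continuous_on (J i) f \<Longrightarrow>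
      ((\<lambda>h. set_lebesgue_integral (Mh h i) (J i) f) \<longlongrightarrow> set_lebesgue_integral (M0 i) (J i) f) Fl"
  shows "uniform_limit (J j) (\<lambda>h. section_integral n J (Mh h) j F) (section_integral n J M0 j F) Fl"
  unfolding uniform_limit_iff
proof (intro allI impI)
  fix e :: real assume "0 < e"
  then have "0 < e / 3" by simp
  then obtain cs where cs: "continuous_factors n J cs"
    and approx: "\<And>u. u \<in> PiE {..n} J \<Longrightarrow> \<bar>F u - tensor_sum n cs u\<bar> < e / 3"
    using Stone_Weierstrass_tensor_sum[OF compact_J F] by metis
  have approx_section: "\<bar>section_integral n J M j F t - section_integral n J M j (tensor_sum n cs) t\<bar> \<le> e / 3"
    if "\<And>i. i \<le> n \<Longrightarrow> i \<noteq> j \<Longrightarrow> prob_space (M i) \<and> sets (M i) = sets borel" "t \<in> J j" for M t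
  proof (rule abs_section_integral_diff_le[OF j that(2) that(2) that(1) F continuous_on_tensor_sum[OF cs]])
    fix w assume "w \<in> PiE {..n} J"
    then have "w(j := t) \<in> PiE {..n} J"
      using j that(2) by (intro fun_upd_in_PiE) auto
    then show "\<bar>F (w(j := t)) - tensor_sum n cs (w(j := t))\<bar> \<le> e / 3"
      using approx less_imp_le by blast
  qed (use less_imp_le[OF \<open>0 < e / 3\<close>] in auto)
  have "\<forall>\<^sub>F h in Fl. \<forall>i\<le>n. i \<noteq> j \<longrightarrow> finite_measure (Mh h i) \<and> sets (Mh h i) = sets borel"
    using Mh by eventually_elim (auto dest: prob_space.finite_measure)
  then have "uniform_limit (J j) (\<lambda>h. section_integral n J (Mh h) j (tensor_sum n cs))
      (section_integral n J M0 j (tensor_sum n cs)) Fl"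
    using M0 by (intro uniform_limit_section_integral_tensor_sum[OF j cs _ _ conv]) (auto dest: prob_space.finite_measure)
  from uniform_limitD[OF this \<open>0 < e / 3\<close>] Mh
  show "\<forall>\<^sub>F h in Fl. \<forall>t\<in>J j. dist (section_integral n J (Mh h) j F t) (section_integral n J M0 j F t) < e"
  proof eventually_elim
    case (elim h)
    show ?case
    proof
      fix t assume t: "t \<in> J j"
      have "\<bar>section_integral n J (Mh h) j F t - section_integral n J (Mh h) j (tensor_sum n cs) t\<bar> \<le> e / 3"
        "\<bar>section_integral n J M0 j F t - section_integral n J M0 j (tensor_sum n cs) t\<bar> \<le> e / 3"
        using elim(2) M0 t by (intro approx_section; simp)+
      moreover have "dist (section_integral n J (Mh h) j (tensor_sum n cs) t)
          (section_integral n J M0 j (tensor_sum n cs) t) < e / 3"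
        using elim(1) t by blast
      ultimately show "dist (section_integral n J (Mh h) j F t) (section_integral n J M0 j F t) < e"
        unfolding dist_real_def by linarith
    qed
  qed
qed

lemma box_integral_telescoping:
  fixes F :: "(nat \<Rightarrow> real) \<Rightarrow> real"
  assumes M0: "\<And>i. i \<le> n \<Longrightarrow> finite_measure (M0 i) \<and> sets (M0 i) = sets borel"
    and M1: "\<And>i. i \<le> n \<Longrightarrow> finite_measure (M1 i) \<and> sets (M1 i) = sets borel"
    and F: "continuous_on (PiE {..n} J) F"
  shows "box_integral n J M1 F - box_integral n J M0 F =
    (\<Sum>j\<le>n. set_lebesgue_integral (M1 j) (J j) (section_integral n J (hybrid M1 M0 j) j F)
           - set_lebesgue_integral (M0 j) (J j) (section_integral n J (hybrid M1 M0 j) j F))"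
proof -
  have H: "finite_measure (hybrid M1 M0 j i) \<and> sets (hybrid M1 M0 j i) = sets borel" if "i \<le> n" for i j
    using M0 M1 that by (simp add: hybrid_def)
  have step: "box_integral n J (hybrid M1 M0 (Suc j)) F - box_integral n J (hybrid M1 M0 j) F
      = set_lebesgue_integral (M1 j) (J j) (section_integral n J (hybrid M1 M0 j) j F)
      - set_lebesgue_integral (M0 j) (J j) (section_integral n J (hybrid M1 M0 j) j F)" if j: "j \<le> n" for j
  proof -
    have "section_integral n J (hybrid M1 M0 (Suc j)) j F = section_integral n J (hybrid M1 M0 j) j F"
      by (rule section_integral_cong) (auto simp: hybrid_def)
    moreover have "box_integral n J (hybrid M1 M0 k) F
        = set_lebesgue_integral (hybrid M1 M0 k j) (J j) (section_integral n J (hybrid M1 M0 k) j F)" for k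
      using j H by (intro box_integral_eq_set_integral_section F) auto
    ultimately show ?thesis
      by (simp add: hybrid_def)
  qed
  have "box_integral n J (hybrid M1 M0 (Suc n)) F = box_integral n J M1 F"
    by (rule box_integral_cong) (simp add: hybrid_def)
  moreover have "hybrid M1 M0 0 = M0"
    by (simp add: hybrid_def fun_eq_iff)
  ultimately have "box_integral n J M1 F - box_integral n J M0 F
      = box_integral n J (hybrid M1 M0 (Suc n)) F - box_integral n J (hybrid M1 M0 0) F"
    by simp
  also have "\<dots> = (\<Sum>j<Suc n. box_integral n J (hybrid M1 M0 (Suc j)) F - box_integral n J (hybrid M1 M0 j) F)"
    by (rule sum_lessThan_telescope[symmetric])
  finally show ?thesis
    by (simp add: lessThan_Suc_atMost step)
qed

end

section \<open>Differentiating a box integral in the parameter of its factors\<close>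

text \<open>In the application \<open>E s i\<close> is \<open>\<eta>\<close> with index \<open>k\<^sub>i\<close> at \<open>\<epsilon> = s\<close>, and the signed measure
  \<open>NP s i - NM s i\<close> is its derivative \<open>\<nu>\<close>.\<close>
locale C1_measure_families =
  fixes n :: nat and J :: "nat \<Rightarrow> real set" and V :: "real set"
    and E NP NM :: "real \<Rightarrow> nat \<Rightarrow> real measure"
  assumes intervals: "\<And>i. i \<le> n \<Longrightarrow> \<exists>a b. a \<le> b \<and> J i = {a..b}"
    and open_V: "open V"
    and E: "\<And>s i. s \<in> V \<Longrightarrow> i \<le> n \<Longrightarrow> prob_space (E s i) \<and> sets (E s i) = sets borel"
    and N: "\<And>s i. s \<in> V \<Longrightarrow> i \<le> n \<Longrightarrow> finite_measure (NP s i) \<and> sets (NP s i) = sets borel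
              \<and> finite_measure (NM s i) \<and> sets (NM s i) = sets borel"
    and N_cont: "\<And>i f. i \<le> n \<Longrightarrow> continuous_on (J i) f \<Longrightarrow>
              continuous_on V (\<lambda>s. signed_set_integral (NP s i) (NM s i) (J i) f)"
    and E_deriv: "\<And>i \<phi> \<phi>' s. i \<le> n \<Longrightarrow> (\<And>u. u \<in> J i \<Longrightarrow> (\<phi> has_real_derivative \<phi>' u) (at u within J i)) \<Longrightarrow>
              continuous_on (J i) \<phi>' \<Longrightarrow> s \<in> V \<Longrightarrow>
              ((\<lambda>s'. set_lebesgue_integral (E s' i) (J i) \<phi>) has_real_derivative
                 signed_set_integral (NP s i) (NM s i) (J i) \<phi>') (at s)"
begin

lemma compact_intervals: "i \<le> n \<Longrightarrow> compact (J i)"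
  using intervals by fastforce

lemma continuous_on_set_integral_E:
  fixes f :: "real \<Rightarrow> real"
  assumes i: "i \<le> n" and f: "continuous_on (J i) f"
  shows "continuous_on V (\<lambda>s. set_lebesgue_integral (E s i) (J i) f)"
proof (rule continuous_on_set_integral_of_C1[OF _ compact_intervals[OF i] _ f])
  show "prob_space (E s i) \<and> sets (E s i) = sets borel" if "s \<in> V" for s
    using E that i by blast
  fix \<phi> \<phi>' :: "real \<Rightarrow> real"
  assume "\<And>u. u \<in> J i \<Longrightarrow> (\<phi> has_real_derivative \<phi>' u) (at u within J i)" "continuous_on (J i) \<phi>'"
  then have "\<forall>s\<in>V. isCont (\<lambda>s. set_lebesgue_integral (E s i) (J i) \<phi>) s"
    using E_deriv[OF i] DERIV_isCont by blast
  then show "continuous_on V (\<lambda>s. set_lebesgue_integral (E s i) (J i) \<phi>)"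
    by (rule continuous_at_imp_continuous_on)
qed

lemma signed_derivative_locally_bounded:
  assumes e: "e \<in> V" and i: "i \<le> n"
  obtains \<delta> C where "\<delta> > 0" "cball e \<delta> \<subseteq> V"
    "\<And>s f c. s \<in> cball e \<delta> \<Longrightarrow> continuous_on (J i) f \<Longrightarrow> (\<And>t. t \<in> J i \<Longrightarrow> \<bar>f t\<bar> \<le> c) \<Longrightarrow>
       \<bar>signed_set_integral (NP s i) (NM s i) (J i) f\<bar> \<le> C * c"
proof -
  obtain a b where ab: "a \<le> b" "J i = {a..b}"
    using intervals[OF i] by blast
  show ?thesis
  proof (rule signed_set_integral_locally_bounded[OF open_V e ab(1), of "\<lambda>s. NP s i" "\<lambda>s. NM s i"])
    show "finite_measure (NP s i) \<and> sets (NP s i) = sets borel \<and> finite_measure (NM s i) \<and> sets (NM s i) = sets borel"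
      if "s \<in> V" for s
      using N[OF that i] by blast
    show "continuous_on V (\<lambda>s. signed_set_integral (NP s i) (NM s i) {a..b} f)" if "continuous_on {a..b} f" for f
      using N_cont[OF i] that by (simp add: ab(2))
    fix \<delta> C assume \<delta>: "\<delta> > 0" "cball e \<delta> \<subseteq> V" and bound: "\<And>s f c. s \<in> cball e \<delta> \<Longrightarrow>
        continuous_on {a..b} f \<Longrightarrow> (\<And>t. t \<in> {a..b} \<Longrightarrow> \<bar>f t\<bar> \<le> c) \<Longrightarrow>
        \<bar>signed_set_integral (NP s i) (NM s i) {a..b} f\<bar> \<le> C * c"
    show thesis
    proof (rule that[OF \<delta>])
      fix s c and f :: "real \<Rightarrow> real"
      assume "s \<in> cball e \<delta>" "continuous_on (J i) f" "\<And>t. t \<in> J i \<Longrightarrow> \<bar>f t\<bar> \<le> c"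
      then show "\<bar>signed_set_integral (NP s i) (NM s i) (J i) f\<bar> \<le> C * c"
        unfolding ab(2) by (rule bound)
    qed
  qed
qed

lemma eventually_cball_in_V:
  assumes "e \<in> V"
  shows "\<forall>\<^sub>F h in at (0::real). \<forall>s. \<bar>s - e\<bar> \<le> \<bar>h\<bar> \<longrightarrow> s \<in> V"
proof -
  obtain \<delta> where "\<delta> > 0" "cball e \<delta> \<subseteq> V"
    using open_V assms open_contains_cball by blast
  then show ?thesis
    unfolding eventually_at by (intro exI[of _ \<delta>]) (auto simp: dist_real_def subset_iff)
qed

lemma eventually_hybrid_prob_space:
  assumes "e \<in> V"
  shows "\<forall>\<^sub>F h in at 0. \<forall>i\<le>n. prob_space (hybrid (E (e + h)) (E e) j i) \<and> sets (hybrid (E (e + h)) (E e) j i) = sets borel"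
  using eventually_cball_in_V[OF assms]
proof eventually_elim
  case (elim h)
  then show ?case
    using E[of "e + h"] E[OF assms] by (simp add: hybrid_def)
qed

lemma uniform_limit_hybrid_section:
  fixes D :: "(nat \<Rightarrow> real) \<Rightarrow> real"
  assumes j: "j \<le> n" and e: "e \<in> V" and D: "continuous_on (PiE {..n} J) D"
  shows "uniform_limit (J j) (\<lambda>h. section_integral n J (hybrid (E (e + h)) (E e) j) j D)
    (section_integral n J (E e) j D) (at 0)"
proof (rule uniform_limit_section_integral[OF compact_intervals j D])
  show "\<forall>\<^sub>F h in at 0. \<forall>i\<le>n. i \<noteq> j \<longrightarrow> prob_space (hybrid (E (e + h)) (E e) j i)
      \<and> sets (hybrid (E (e + h)) (E e) j i) = sets borel"
    using eventually_hybrid_prob_space[OF e] by eventually_elim blast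
  fix i and f :: "real \<Rightarrow> real" assume i: "i \<le> n" and f: "continuous_on (J i) f"
  show "((\<lambda>h. set_lebesgue_integral (hybrid (E (e + h)) (E e) j i) (J i) f)
      \<longlongrightarrow> set_lebesgue_integral (E e i) (J i) f) (at 0)"
  proof (cases "i < j")
    case True
    have "((\<lambda>h. e + h) \<longlongrightarrow> e) (at (0::real))"
      by (auto intro!: tendsto_eq_intros)
    moreover have "\<forall>\<^sub>F h in at 0. e + h \<in> V"
      using eventually_cball_in_V[OF e] by eventually_elim simp
    ultimately have "((\<lambda>h. set_lebesgue_integral (E (e + h) i) (J i) f) \<longlongrightarrow> set_lebesgue_integral (E e i) (J i) f) (at 0)"
      by (rule continuous_on_tendsto_compose[OF continuous_on_set_integral_E[OF i f] _ e])
    then show ?thesis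
      using True by (simp add: hybrid_def)
  qed (simp add: hybrid_def)
qed (use E[OF e] in auto)

text \<open>The local bound from the uniform boundedness principle controls the change of the integrand,
  continuity in \<open>s\<close> the change of the signed measure.\<close>
lemma signed_derivative_joint_tendsto:
  fixes \<Psi> :: "real \<Rightarrow> real \<Rightarrow> real"
  assumes j: "j \<le> n" and e: "e \<in> V"
    and cont: "\<forall>\<^sub>F h in at 0. continuous_on (J j) (\<Psi> h)" and cont0: "continuous_on (J j) \<Psi>0"
    and unif: "uniform_limit (J j) \<Psi> \<Psi>0 (at 0)" and "0 < c"
  shows "\<forall>\<^sub>F h in at 0. \<forall>s. \<bar>s - e\<bar> \<le> \<bar>h\<bar> \<longrightarrow>
    \<bar>signed_set_integral (NP s j) (NM s j) (J j) (\<Psi> h) - signed_set_integral (NP e j) (NM e j) (J j) \<Psi>0\<bar> < c"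
proof -
  obtain \<delta> C where "\<delta> > 0" and \<delta>: "cball e \<delta> \<subseteq> V"
    and C: "\<And>s f c. s \<in> cball e \<delta> \<Longrightarrow> continuous_on (J j) f \<Longrightarrow> (\<And>t. t \<in> J j \<Longrightarrow> \<bar>f t\<bar> \<le> c) \<Longrightarrow>
       \<bar>signed_set_integral (NP s j) (NM s j) (J j) f\<bar> \<le> C * c"
    using signed_derivative_locally_bounded[OF e j] by blast
  define \<eta> where "\<eta> = c / (2 * (\<bar>C\<bar> + 1))"
  have "\<eta> > 0"
    using \<open>0 < c\<close> by (simp add: \<eta>_def add_pos_nonneg)
  have "C * \<eta> < c / 2"
  proof -
    have "C * \<eta> < (\<bar>C\<bar> + 1) * \<eta>"
      using \<open>\<eta> > 0\<close> by (intro mult_strict_right_mono) auto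
    also have "\<dots> = c / 2"
      unfolding \<eta>_def by (simp add: field_simps add_pos_nonneg)
    finally show ?thesis .
  qed
  obtain d where "d > 0" and d: "\<And>s. s \<in> V \<Longrightarrow> dist s e < d \<Longrightarrow>
      dist (signed_set_integral (NP s j) (NM s j) (J j) \<Psi>0) (signed_set_integral (NP e j) (NM e j) (J j) \<Psi>0) < c / 2"
    using N_cont[OF j cont0] e \<open>0 < c\<close> unfolding continuous_on_iff by (metis half_gt_zero)
  have "\<forall>\<^sub>F h in at (0::real). \<bar>h\<bar> < min \<delta> d"
    using \<open>\<delta> > 0\<close> \<open>d > 0\<close> unfolding eventually_at by (intro exI[of _ "min \<delta> d"]) (auto simp: dist_real_def)
  moreover have "\<forall>\<^sub>F h in at 0. \<forall>t\<in>J j. dist (\<Psi> h t) (\<Psi>0 t) < \<eta>"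
    using uniform_limitD[OF unif \<open>\<eta> > 0\<close>] .
  ultimately show ?thesis
    using cont
  proof eventually_elim
    case (elim h)
    show ?case
    proof (intro allI impI)
      fix s assume "\<bar>s - e\<bar> \<le> \<bar>h\<bar>"
      then have s: "s \<in> cball e \<delta>" "dist s e < d"
        using elim(1) by (auto simp: dist_real_def)
      then have "s \<in> V"
        using \<delta> by blast
      have "signed_set_integral (NP s j) (NM s j) (J j) (\<lambda>t. \<Psi> h t - \<Psi>0 t)
          = signed_set_integral (NP s j) (NM s j) (J j) (\<Psi> h) - signed_set_integral (NP s j) (NM s j) (J j) \<Psi>0"
        using N[OF \<open>s \<in> V\<close> j] compact_intervals[OF j] elim(3) cont0 by (intro signed_set_integral_diff) auto
      moreover have "\<bar>signed_set_integral (NP s j) (NM s j) (J j) (\<lambda>t. \<Psi> h t - \<Psi>0 t)\<bar> \<le> C * \<eta>"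
        using elim(2,3) cont0 by (intro C[OF s(1)] continuous_on_diff) (auto simp: dist_real_def less_imp_le)
      moreover have "\<bar>signed_set_integral (NP s j) (NM s j) (J j) \<Psi>0
          - signed_set_integral (NP e j) (NM e j) (J j) \<Psi>0\<bar> < c / 2"
        using d[OF \<open>s \<in> V\<close> s(2)] by (simp add: dist_real_def)
      ultimately show "\<bar>signed_set_integral (NP s j) (NM s j) (J j) (\<Psi> h)
          - signed_set_integral (NP e j) (NM e j) (J j) \<Psi>0\<bar> < c"
        using \<open>C * \<eta> < c / 2\<close> by linarith
    qed
  qed
qed

lemma hybrid_quotient_tendsto:
  fixes F D :: "(nat \<Rightarrow> real) \<Rightarrow> real"
  assumes j: "j \<le> n" and e: "e \<in> V"
    and F: "continuous_on (PiE {..n} J) F" and D: "continuous_on (PiE {..n} J) D"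
    and dF: "\<And>u. u \<in> PiE {..n} J \<Longrightarrow> ((\<lambda>t. F (u(j := t))) has_real_derivative D u) (at (u j) within J j)"
  shows "((\<lambda>h. (set_lebesgue_integral (E (e + h) j) (J j) (section_integral n J (hybrid (E (e + h)) (E e) j) j F)
              - set_lebesgue_integral (E e j) (J j) (section_integral n J (hybrid (E (e + h)) (E e) j) j F)) / h)
         \<longlongrightarrow> signed_set_integral (NP e j) (NM e j) (J j) (section_integral n J (E e) j D)) (at 0)"
proof -
  define \<Phi> where "\<Phi> h = section_integral n J (hybrid (E (e + h)) (E e) j) j F" for h
  define \<Psi> where "\<Psi> h = section_integral n J (hybrid (E (e + h)) (E e) j) j D" for h
  have \<Psi>_cont: "\<forall>\<^sub>F h in at 0. continuous_on (J j) (\<Psi> h)"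
    using eventually_hybrid_prob_space[OF e]
    by eventually_elim (unfold \<Psi>_def, intro continuous_on_section_integral[OF compact_intervals j _ D], auto)
  have "((\<lambda>h. (set_lebesgue_integral (E (e + h) j) (J j) (\<Phi> h) - set_lebesgue_integral (E e j) (J j) (\<Phi> h)) / h)
      \<longlongrightarrow> signed_set_integral (NP e j) (NM e j) (J j) (section_integral n J (E e) j D)) (at 0)"
  proof (rule difference_quotient_tendsto[where g="\<lambda>h s. set_lebesgue_integral (E s j) (J j) (\<Phi> h)"
        and g'="\<lambda>h s. signed_set_integral (NP s j) (NM s j) (J j) (\<Psi> h)"])
    show "\<forall>\<^sub>F h in at 0. \<forall>s. \<bar>s - e\<bar> \<le> \<bar>h\<bar> \<longrightarrow> ((\<lambda>s. set_lebesgue_integral (E s j) (J j) (\<Phi> h))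
        has_real_derivative signed_set_integral (NP s j) (NM s j) (J j) (\<Psi> h)) (at s)"
      using eventually_cball_in_V[OF e] eventually_hybrid_prob_space[OF e, of j] \<Psi>_cont
    proof eventually_elim
      case (elim h)
      have "(\<Phi> h has_real_derivative \<Psi> h t) (at t within J j)" if "t \<in> J j" for t
        unfolding \<Phi>_def \<Psi>_def using elim(2) intervals[OF j]
        by (intro section_integral_has_derivative[OF compact_intervals j _ _ F D dF that]) auto
      then show ?case
        using elim(1,3) by (intro allI impI E_deriv[OF j]) auto
    qed
  next
    fix c :: real assume "0 < c"
    show "\<forall>\<^sub>F h in at 0. \<forall>s. \<bar>s - e\<bar> \<le> \<bar>h\<bar> \<longrightarrow> \<bar>signed_set_integral (NP s j) (NM s j) (J j) (\<Psi> h)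
        - signed_set_integral (NP e j) (NM e j) (J j) (section_integral n J (E e) j D)\<bar> < c"
      using E[OF e] \<Psi>_cont \<open>0 < c\<close> unfolding \<Psi>_def
      by (intro signed_derivative_joint_tendsto[OF j e] uniform_limit_hybrid_section[OF j e D]
          continuous_on_section_integral[OF compact_intervals j _ D]) auto
  qed
  then show ?thesis
    unfolding \<Phi>_def .
qed

theorem has_derivative_box_integral:
  fixes F :: "(nat \<Rightarrow> real) \<Rightarrow> real" and D :: "nat \<Rightarrow> (nat \<Rightarrow> real) \<Rightarrow> real"
  assumes F: "continuous_on (PiE {..n} J) F" and D: "\<And>j. j \<le> n \<Longrightarrow> continuous_on (PiE {..n} J) (D j)"
    and dF: "\<And>j u. j \<le> n \<Longrightarrow> u \<in> PiE {..n} J \<Longrightarrow>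
      ((\<lambda>t. F (u(j := t))) has_real_derivative D j u) (at (u j) within J j)"
    and e: "e \<in> V"
  shows "((\<lambda>s. box_integral n J (E s) F) has_real_derivative
      (\<Sum>j\<le>n. signed_set_integral (NP e j) (NM e j) (J j) (section_integral n J (E e) j (D j)))) (at e)"
  unfolding DERIV_def
proof (rule Lim_transform_eventually)
  let ?q = "\<lambda>j h. (set_lebesgue_integral (E (e + h) j) (J j) (section_integral n J (hybrid (E (e + h)) (E e) j) j F)
      - set_lebesgue_integral (E e j) (J j) (section_integral n J (hybrid (E (e + h)) (E e) j) j F)) / h"
  show "((\<lambda>h. \<Sum>j\<le>n. ?q j h)
      \<longlongrightarrow> (\<Sum>j\<le>n. signed_set_integral (NP e j) (NM e j) (J j) (section_integral n J (E e) j (D j)))) (at 0)"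
    using D dF by (intro tendsto_sum hybrid_quotient_tendsto[OF _ e F]) auto
  have "\<forall>\<^sub>F h in at 0. e + h \<in> V"
    using eventually_cball_in_V[OF e] by eventually_elim simp
  then show "\<forall>\<^sub>F h in at 0. (\<Sum>j\<le>n. ?q j h) = (box_integral n J (E (e + h)) F - box_integral n J (E e) F) / h"
  proof eventually_elim
    case (elim h)
    have "\<And>i. i \<le> n \<Longrightarrow> finite_measure (E s i) \<and> sets (E s i) = sets borel" if "s \<in> V" for s
      using E[OF that] prob_space.finite_measure by blast
    then show ?case
      using elim e compact_intervals F
      by (simp add: box_integral_telescoping sum_divide_distrib)
  qed
qed

end

section \<open>The integrand of the inverse-branch transfer operator\<close>

lemma Ck_on_Suc_Suc_D:
  assumes "Ck_on (Suc (Suc m)) N B f" "i \<in> N" "i' \<in> N"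
  shows "continuous_on B f"
    and "\<And>w. w \<in> B \<Longrightarrow> ((\<lambda>t. f (w(i := t))) has_real_derivative pderiv_box B i f w) (at (w i) within {t. w(i := t) \<in> B})"
    and "continuous_on B (pderiv_box B i f)"
    and "\<And>w. w \<in> B \<Longrightarrow> ((\<lambda>t. pderiv_box B i f (w(i' := t))) has_real_derivative pderiv_box B i' (pderiv_box B i f) w)
            (at (w i') within {t. w(i' := t) \<in> B})"
    and "continuous_on B (pderiv_box B i' (pderiv_box B i f))"
  using assms by (auto elim: Ck_on.elims)

lemma pderiv_box_has_derivative:
  assumes "((\<lambda>t. f (w(i := t))) has_real_derivative d) (at (w i) within {t. w(i := t) \<in> B})"
  shows "((\<lambda>t. f (w(i := t))) has_real_derivative pderiv_box B i f w) (at (w i) within {t. w(i := t) \<in> B})"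
  unfolding pderiv_box_def by (rule someI[of _ d]) (rule assms)

lemma pderiv_box_eqI:
  assumes slice: "{t. w(i := t) \<in> B} = {a..b}" "a < b" "w i \<in> {a..b}"
    and d: "((\<lambda>t. f (w(i := t))) has_real_derivative d) (at (w i) within {t. w(i := t) \<in> B})"
  shows "pderiv_box B i f w = d"
proof (rule vector_derivative_unique_within_closed_interval)
  show "a < b" "w i \<in> cbox a b"
    using slice(2,3) by auto
  show "((\<lambda>t. f (w(i := t))) has_vector_derivative pderiv_box B i f w) (at (w i) within cbox a b)"
    using pderiv_box_has_derivative[OF d]
    unfolding slice(1) has_real_derivative_iff_has_vector_derivative cbox_interval .
  show "((\<lambda>t. f (w(i := t))) has_vector_derivative d) (at (w i) within cbox a b)"
    using d unfolding slice(1) has_real_derivative_iff_has_vector_derivative cbox_interval .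
qed

text \<open>On a degenerate slice every number is a derivative, so \<open>pderiv_box\<close> takes the
  junk value \<open>SOME d. True\<close>, which at least does not depend on the point.\<close>
lemma pderiv_box_singleton:
  assumes "w \<in> B" "{t. w(i := t) \<in> B} = {a}"
  shows "pderiv_box B i f w = (SOME d. True)"
proof -
  have "w i \<in> {t. w(i := t) \<in> B}"
    using assms(1) by simp
  then have "w i = a"
    using assms(2) by blast
  moreover have "at (w i) within {w i} = bot"
    by (simp add: at_within_def)
  ultimately show ?thesis
    unfolding pderiv_box_def assms(2)
    by (simp add: has_field_derivative_def has_derivative_def bounded_linear_mult_right)
qed

lemma has_real_derivative_abs_slice:
  assumes d: "((\<lambda>t. f (w(i := t))) has_real_derivative d) (at (w i) within S)" and "f w \<noteq> 0"
  shows "((\<lambda>t. \<bar>f (w(i := t))\<bar>) has_real_derivative sgn (f w) * d) (at (w i) within S)"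
  using DERIV_chain2[OF has_real_derivative_abs d] \<open>f w \<noteq> 0\<close> by simp

lemma continuous_on_pderiv_box_abs:
  assumes slice: "\<And>w. w \<in> B \<Longrightarrow> {t. w(i := t) \<in> B} = {a..b}" and "a \<le> b"
    and d: "\<And>w. w \<in> B \<Longrightarrow> ((\<lambda>t. f (w(i := t))) has_real_derivative pderiv_box B i f w)
      (at (w i) within {t. w(i := t) \<in> B})"
    and f: "continuous_on B f" "continuous_on B (pderiv_box B i f)" "\<And>w. w \<in> B \<Longrightarrow> f w \<noteq> 0"
  shows "continuous_on B (pderiv_box B i (\<lambda>w. \<bar>f w\<bar>))"
proof (cases "a < b")
  case True
  have eq: "pderiv_box B i (\<lambda>w. \<bar>f w\<bar>) w = sgn (f w) * pderiv_box B i f w" if "w \<in> B" for w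
  proof (rule pderiv_box_eqI[OF slice[OF that] True])
    show "w i \<in> {a..b}"
      using slice[OF that] that by (metis fun_upd_triv mem_Collect_eq)
    show "((\<lambda>t. \<bar>f (w(i := t))\<bar>) has_real_derivative sgn (f w) * pderiv_box B i f w) (at (w i) within {t. w(i := t) \<in> B})"
      using d[OF that] f(3)[OF that] by (rule has_real_derivative_abs_slice)
  qed
  have "continuous_on B (\<lambda>w. sgn (f w) * pderiv_box B i f w)"
    using f by (intro continuous_on_mult continuous_on_sgn) auto
  then show ?thesis
    by (rule continuous_on_eq) (simp add: eq)
next
  case False
  then have "\<And>w. w \<in> B \<Longrightarrow> {t. w(i := t) \<in> B} = {a}"
    using slice \<open>a \<le> b\<close> by auto
  then have eq: "pderiv_box B i (\<lambda>w. \<bar>f w\<bar>) w = (SOME d. True)" if "w \<in> B" for w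
    using that by (intro pderiv_box_singleton) auto
  show ?thesis
    by (rule continuous_on_eq[OF continuous_on_const]) (simp add: eq)
qed

lemma gcomp_cong:
  assumes "\<And>j. j \<le> n \<Longrightarrow> u j = v j"
  shows "gcomp gb n u x = gcomp gb n v x"
proof -
  have "foldr (\<lambda>j f. gb j (u j) \<circ> f) [0..<Suc n] id = foldr (\<lambda>j f. gb j (v j) \<circ> f) [0..<Suc n] id"
    using assms by (intro foldr_cong) auto
  then show ?thesis
    unfolding gcomp_def by simp
qed

lemma gcomp_eq_gvec: "gcomp gb n u x = gvec gb n (u(Suc n := x))"
proof -
  have "gcomp gb n (u(Suc n := x)) x = gcomp gb n u x"
    by (rule gcomp_cong) simp
  then show ?thesis
    by (simp add: gvec_def)
qed

lemma foldr_branches_mem: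
  assumes "\<forall>j\<in>set js. \<forall>t\<in>I (k j). \<forall>x\<in>{0..1::real}. gb j t x \<in> {0..1}" "\<forall>j\<in>set js. u j \<in> I (k j)"
  shows "\<forall>x\<in>{0..1}. foldr (\<lambda>j f. gb j (u j) \<circ> f) js id x \<in> {0..1::real}"
  using assms by (induction js) auto

lemma gcomp_mem:
  assumes gb_X: "\<forall>j\<le>n. \<forall>t\<in>I (k j). \<forall>x\<in>{0..1}. gb j t x \<in> {0..1}"
    and gb0: "\<forall>t\<in>I (k 0). \<forall>x\<in>{0..1}. gb 0 t x \<in> {dl..dh}"
    and u: "\<And>j. j \<le> n \<Longrightarrow> u j \<in> I (k j)" and x: "x \<in> {0..1}"
  shows "gcomp gb n u x \<in> {dl..dh}"
proof -
  have "[0..<Suc n] = 0 # [1..<Suc n]"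
    by (simp add: upt_rec)
  then have eq: "gcomp gb n u x = gb 0 (u 0) (foldr (\<lambda>j f. gb j (u j) \<circ> f) [1..<Suc n] id x)"
    unfolding gcomp_def by simp
  have "foldr (\<lambda>j f. gb j (u j) \<circ> f) [1..<Suc n] id x \<in> {0..1}"
    using foldr_branches_mem[of "[1..<Suc n]" I k gb u] gb_X u x by auto
  then show ?thesis
    unfolding eq using gb0 u[of 0] by blast
qed

lemma gbox_slice:
  assumes "w \<in> gbox I k n" "j \<le> n"
  shows "{t. w(j := t) \<in> gbox I k n} = I (k j)"
  using assms unfolding gbox_def by auto

lemma fun_upd_Suc_in_gbox:
  assumes "u \<in> PiE {..n} (\<lambda>i. I (k i))" "x \<in> {0..1}"
  shows "u(Suc n := x) \<in> gbox I k n"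
  using assms unfolding gbox_def by (auto simp: PiE_iff)

locale branch_composition =
  fixes n :: nat and I :: "nat \<Rightarrow> real set" and k :: "nat \<Rightarrow> nat" and gb :: "nat \<Rightarrow> real \<Rightarrow> real \<Rightarrow> real"
    and dl dh :: real and hh hh' :: "real \<Rightarrow> real"
  assumes intervals: "\<And>j. j \<le> n \<Longrightarrow> \<exists>lo hi. lo \<le> hi \<and> I (k j) = {lo..hi}"
    and gb_X: "\<forall>j\<le>n. \<forall>t\<in>I (k j). \<forall>x\<in>{0..1}. gb j t x \<in> {0..1}"
    and gb0_Delta: "\<forall>t\<in>I (k 0). \<forall>x\<in>{0..1}. gb 0 t x \<in> {dl..dh}"
    and g_C3: "Ck_on 3 {..Suc n} (gbox I k n) (gvec gb n)"
    and g'_nz: "\<forall>w\<in>gbox I k n. pderiv_box (gbox I k n) (Suc n) (gvec gb n) w \<noteq> 0"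
    and hh_deriv: "\<forall>y\<in>{dl..dh}. (hh has_real_derivative hh' y) (at y within {dl..dh})"
    and hh'_cont: "continuous_on {dl..dh} hh'"
begin

lemma gvec_mem: "w \<in> gbox I k n \<Longrightarrow> gvec gb n w \<in> {dl..dh}"
  unfolding gvec_def using gb_X gb0_Delta by (intro gcomp_mem) (auto simp: gbox_def)

lemma gvec_C2:
  assumes "i \<le> Suc n" "i' \<le> Suc n"
  shows "continuous_on (gbox I k n) (gvec gb n)"
    and "\<And>w. w \<in> gbox I k n \<Longrightarrow> ((\<lambda>t. gvec gb n (w(i := t))) has_real_derivative pderiv_box (gbox I k n) i (gvec gb n) w)
            (at (w i) within {t. w(i := t) \<in> gbox I k n})"
    and "continuous_on (gbox I k n) (pderiv_box (gbox I k n) i (gvec gb n))"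
    and "\<And>w. w \<in> gbox I k n \<Longrightarrow> ((\<lambda>t. pderiv_box (gbox I k n) i (gvec gb n) (w(i' := t))) has_real_derivative
            pderiv_box (gbox I k n) i' (pderiv_box (gbox I k n) i (gvec gb n)) w)
            (at (w i') within {t. w(i' := t) \<in> gbox I k n})"
    and "continuous_on (gbox I k n) (pderiv_box (gbox I k n) i' (pderiv_box (gbox I k n) i (gvec gb n)))"
  using Ck_on_Suc_Suc_D[of 1 "{..Suc n}" "gbox I k n" "gvec gb n" i i'] g_C3 assms
  by (simp_all add: numeral_3_eq_3)

lemma continuous_on_hh_gvec: "continuous_on (gbox I k n) (\<lambda>w. hh (gvec gb n w))"
proof (rule continuous_on_compose2[OF _ gvec_C2(1)])
  show "continuous_on {dl..dh} hh"
    using hh_deriv by (meson DERIV_continuous continuous_on_eq_continuous_within)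
qed (use gvec_mem in auto)

lemma continuous_on_hh'_gvec: "continuous_on (gbox I k n) (\<lambda>w. hh' (gvec gb n w))"
  by (rule continuous_on_compose2[OF hh'_cont gvec_C2(1)]) (use gvec_mem in auto)

lemma continuous_on_pderiv_box_abs_gvec:
  assumes "j \<le> n"
  shows "continuous_on (gbox I k n) (pderiv_box (gbox I k n) j (\<lambda>w. \<bar>pderiv_box (gbox I k n) (Suc n) (gvec gb n) w\<bar>))"
proof -
  obtain lo hi where "lo \<le> hi" "I (k j) = {lo..hi}"
    using intervals[OF assms] by blast
  then show ?thesis
    using assms g'_nz gbox_slice[of _ I k n j]
    by (intro continuous_on_pderiv_box_abs[where a=lo and b=hi] gvec_C2) auto
qed

lemma gbox_integrand_has_derivative:
  assumes w: "w \<in> gbox I k n" and j: "j \<le> n"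
  shows "((\<lambda>t. hh (gvec gb n (w(j := t))) * \<bar>pderiv_box (gbox I k n) (Suc n) (gvec gb n) (w(j := t))\<bar>)
    has_real_derivative hh' (gvec gb n w) * pderiv_box (gbox I k n) j (gvec gb n) w
        * \<bar>pderiv_box (gbox I k n) (Suc n) (gvec gb n) w\<bar>
      + hh (gvec gb n w) * pderiv_box (gbox I k n) j (\<lambda>w. \<bar>pderiv_box (gbox I k n) (Suc n) (gvec gb n) w\<bar>) w)
    (at (w j) within I (k j))"
proof -
  let ?pd = "\<lambda>i. pderiv_box (gbox I k n) i (gvec gb n)"
  have slice: "{t. w(j := t) \<in> gbox I k n} = I (k j)"
    by (rule gbox_slice[OF w j])
  have gvec_j: "((\<lambda>t. gvec gb n (w(j := t))) has_real_derivative ?pd j w) (at (w j) within I (k j))"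
    using gvec_C2(2)[of j j w] w j unfolding slice by simp
  have "(\<lambda>t. gvec gb n (w(j := t))) ` I (k j) \<subseteq> {dl..dh}"
    using gvec_mem slice by blast
  moreover have "(hh has_real_derivative hh' (gvec gb n w)) (at (gvec gb n w) within {dl..dh})"
    using hh_deriv gvec_mem[OF w] by blast
  ultimately have "(hh has_real_derivative hh' (gvec gb n w))
      (at ((\<lambda>t. gvec gb n (w(j := t))) (w j)) within (\<lambda>t. gvec gb n (w(j := t))) ` I (k j))"
    by (simp add: has_field_derivative_subset)
  from DERIV_image_chain[OF this gvec_j]
  have hh_j: "((\<lambda>t. hh (gvec gb n (w(j := t)))) has_real_derivative hh' (gvec gb n w) * ?pd j w) (at (w j) within I (k j))"
    by (simp add: o_def)
  have pd_j: "((\<lambda>t. ?pd (Suc n) (w(j := t))) has_real_derivative pderiv_box (gbox I k n) j (?pd (Suc n)) w)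
      (at (w j) within {t. w(j := t) \<in> gbox I k n})"
    using gvec_C2(4)[of "Suc n" j w] w j by simp
  have "((\<lambda>t. \<bar>?pd (Suc n) (w(j := t))\<bar>) has_real_derivative
      sgn (?pd (Suc n) w) * pderiv_box (gbox I k n) j (?pd (Suc n)) w) (at (w j) within {t. w(j := t) \<in> gbox I k n})"
    using has_real_derivative_abs_slice[where f="?pd (Suc n)", OF pd_j] g'_nz w by blast
  from pderiv_box_has_derivative[where f="\<lambda>w. \<bar>?pd (Suc n) w\<bar>", OF this]
  have abs_j: "((\<lambda>t. \<bar>?pd (Suc n) (w(j := t))\<bar>) has_real_derivative pderiv_box (gbox I k n) j (\<lambda>w. \<bar>?pd (Suc n) w\<bar>) w)
      (at (w j) within I (k j))"
    unfolding slice .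
  show ?thesis
    using DERIV_mult[OF hh_j abs_j] by (simp add: algebra_simps)
qed

lemma continuous_on_comp_fun_upd_Suc:
  assumes "continuous_on (gbox I k n) \<Phi>" "x \<in> {0..1}"
  shows "continuous_on (PiE {..n} (\<lambda>i. I (k i))) (\<lambda>u. \<Phi> (u(Suc n := x)))"
  by (rule continuous_on_compose2[OF assms(1) continuous_on_fun_upd_const]) (use fun_upd_Suc_in_gbox assms(2) in auto)

lemma continuous_on_B_integrand:
  assumes "x \<in> {0..1}"
  shows "continuous_on (PiE {..n} (\<lambda>i. I (k i))) (\<lambda>u. hh (gcomp gb n u x) * \<bar>gder gb I k n (Suc n) u x\<bar>)"
proof -
  have "continuous_on (gbox I k n) (\<lambda>w. hh (gvec gb n w) * \<bar>pderiv_box (gbox I k n) (Suc n) (gvec gb n) w\<bar>)"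
    by (intro continuous_on_mult continuous_on_rabs continuous_on_hh_gvec gvec_C2(3)[of _ "Suc n"]) auto
  from continuous_on_comp_fun_upd_Suc[OF this assms] show ?thesis
    unfolding gcomp_eq_gvec gder_def by simp
qed

lemma continuous_on_B_integrand_derivative:
  assumes "x \<in> {0..1}" "j \<le> n"
  shows "continuous_on (PiE {..n} (\<lambda>i. I (k i)))
    (\<lambda>u. hh' (gcomp gb n u x) * gder gb I k n j u x * \<bar>gder gb I k n (Suc n) u x\<bar>
    + hh (gcomp gb n u x) * absgder_der gb I k n j u x)"
proof -
  have "continuous_on (gbox I k n) (\<lambda>w. hh' (gvec gb n w) * pderiv_box (gbox I k n) j (gvec gb n) w
      * \<bar>pderiv_box (gbox I k n) (Suc n) (gvec gb n) w\<bar>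
      + hh (gvec gb n w) * pderiv_box (gbox I k n) j (\<lambda>w. \<bar>pderiv_box (gbox I k n) (Suc n) (gvec gb n) w\<bar>) w)"
    using assms(2)
    by (intro continuous_on_add continuous_on_mult continuous_on_rabs continuous_on_hh_gvec continuous_on_hh'_gvec
        gvec_C2(3)[of _ "Suc n"] continuous_on_pderiv_box_abs_gvec) auto
  from continuous_on_comp_fun_upd_Suc[OF this assms(1)] show ?thesis
    unfolding gcomp_eq_gvec gder_def absgder_der_def by simp
qed

lemma B_integrand_has_derivative:
  assumes x: "x \<in> {0..1}" and j: "j \<le> n" and u: "u \<in> PiE {..n} (\<lambda>i. I (k i))"
  shows "((\<lambda>t. hh (gcomp gb n (u(j := t)) x) * \<bar>gder gb I k n (Suc n) (u(j := t)) x\<bar>) has_real_derivative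
      hh' (gcomp gb n u x) * gder gb I k n j u x * \<bar>gder gb I k n (Suc n) u x\<bar>
      + hh (gcomp gb n u x) * absgder_der gb I k n j u x) (at (u j) within I (k j))"
proof -
  define w where "w = u(Suc n := x)"
  have "w \<in> gbox I k n"
    unfolding w_def using u x by (rule fun_upd_Suc_in_gbox)
  moreover have "(u(j := t))(Suc n := x) = w(j := t)" for t
    using j by (simp add: w_def fun_upd_twist)
  moreover have "w j = u j"
    using j by (simp add: w_def)
  ultimately show ?thesis
    using gbox_integrand_has_derivative[of w j] j
    unfolding gcomp_eq_gvec gder_def absgder_der_def w_def by simp
qed

end

section \<open>Derivatives of the word weights and of the transfer terms\<close>

lemma a_word_has_derivative:
  assumes "\<And>j. j \<le> n \<Longrightarrow> ((\<lambda>e'. p e' (k j)) has_real_derivative dp (k j)) (at e)"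
  shows "((\<lambda>e'. a_word (p e') n k) has_real_derivative (\<Sum>j\<le>n. dp (k j) * (\<Prod>i\<in>{..n} - {j}. p e (k i)))) (at e)"
proof -
  have "((\<lambda>e'. \<Prod>j\<in>{..n}. p e' (k j)) has_derivative
      (\<lambda>y. \<Sum>j\<in>{..n}. dp (k j) * y * (\<Prod>i\<in>{..n} - {j}. p e (k i)))) (at e)"
    using assms by (intro has_derivative_prod) (auto simp: has_field_derivative_def)
  then show ?thesis
    unfolding a_word_def has_field_derivative_def
    by (rule has_derivative_eq_rhs) (auto simp: fun_eq_iff sum_distrib_left algebra_simps)
qed

lemma Pz_int_eq_signed_set_integral:
  fixes F :: "(nat \<Rightarrow> real) \<Rightarrow> real"
  assumes j: "j \<le> n" and compact: "\<And>i. i \<le> n \<Longrightarrow> compact (I (k i))"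
    and eta: "\<And>i. i \<le> n \<Longrightarrow> finite_measure (eta (k i)) \<and> sets (eta (k i)) = sets borel"
    and nu: "finite_measure nup" "sets nup = sets borel" "finite_measure num" "sets num = sets borel"
    and F: "continuous_on (PiE {..n} (\<lambda>i. I (k i))) F"
  shows "Pz_int eta nup num j k I n F
    = signed_set_integral nup num (I (k j)) (section_integral n (\<lambda>i. I (k i)) (\<lambda>i. eta (k i)) j F)"
proof -
  have "set_lebesgue_integral (Pz eta \<mu> j k n) (PiE {..n} (\<lambda>i. I (k i))) F
      = set_lebesgue_integral \<mu> (I (k j)) (section_integral n (\<lambda>i. I (k i)) (\<lambda>i. eta (k i)) j F)"
    if "finite_measure \<mu>" "sets \<mu> = sets borel" for \<mu>
  proof -
    let ?M = "\<lambda>i. if i = j then \<mu> else eta (k i)"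
    have "set_lebesgue_integral (Pz eta \<mu> j k n) (PiE {..n} (\<lambda>i. I (k i))) F = box_integral n (\<lambda>i. I (k i)) ?M F"
      by (simp add: Pz_def box_integral_def)
    also have "\<dots> = set_lebesgue_integral (?M j) (I (k j)) (section_integral n (\<lambda>i. I (k i)) ?M j F)"
      using that eta by (intro box_integral_eq_set_integral_section[OF compact j _ F]) auto
    also have "section_integral n (\<lambda>i. I (k i)) ?M j F = section_integral n (\<lambda>i. I (k i)) (\<lambda>i. eta (k i)) j F"
      by (rule section_integral_cong) simp
    finally show ?thesis
      by simp
  qed
  then show ?thesis
    using nu by (simp add: Pz_int_def signed_set_integral_def)
qed

lemma B_word_has_derivative:
  assumes "C1_measure_families n (\<lambda>i. I (k i)) V (\<lambda>s i. eta s (k i)) (\<lambda>s i. nup s (k i)) (\<lambda>s i. num s (k i))"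
    and "branch_composition n I k gb dl dh hh hh'" and e: "e \<in> V" and x: "x \<in> {0..1}"
  shows "((\<lambda>e'. B_word (eta e') gb I k n hh x) has_real_derivative
    (\<Sum>j\<le>n. Pz_int (eta e) (nup e (k j)) (num e (k j)) j k I n
      (\<lambda>u. hh' (gcomp gb n u x) * gder gb I k n j u x * \<bar>gder gb I k n (Suc n) u x\<bar>
        + hh (gcomp gb n u x) * absgder_der gb I k n j u x))) (at e)"
proof -
  interpret C1_measure_families n "\<lambda>i. I (k i)" V "\<lambda>s i. eta s (k i)" "\<lambda>s i. nup s (k i)" "\<lambda>s i. num s (k i)"
    by fact
  interpret branch_composition n I k gb dl dh hh hh'
    by fact
  let ?F = "\<lambda>u. hh (gcomp gb n u x) * \<bar>gder gb I k n (Suc n) u x\<bar>"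
  let ?D = "\<lambda>j u. hh' (gcomp gb n u x) * gder gb I k n j u x * \<bar>gder gb I k n (Suc n) u x\<bar>
    + hh (gcomp gb n u x) * absgder_der gb I k n j u x"
  have "((\<lambda>s. box_integral n (\<lambda>i. I (k i)) (\<lambda>i. eta s (k i)) ?F) has_real_derivative
      (\<Sum>j\<le>n. signed_set_integral (nup e (k j)) (num e (k j)) (I (k j))
        (section_integral n (\<lambda>i. I (k i)) (\<lambda>i. eta e (k i)) j (?D j)))) (at e)"
    using x e by (intro has_derivative_box_integral continuous_on_B_integrand continuous_on_B_integrand_derivative
        B_integrand_has_derivative)
  moreover have "Pz_int (eta e) (nup e (k j)) (num e (k j)) j k I n (?D j) = signed_set_integral (nup e (k j)) (num e (k j))
      (I (k j)) (section_integral n (\<lambda>i. I (k i)) (\<lambda>i. eta e (k i)) j (?D j))" if "j \<le> n" for j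
    using that E[OF e] N[OF e that] x
    by (intro Pz_int_eq_signed_set_integral compact_intervals continuous_on_B_integrand_derivative)
       (auto dest: prob_space.finite_measure)
  ultimately show ?thesis
    by (simp add: B_word_def box_integral_def)
qed

theorem lemma4p2:
  fixes V :: "real set"
    and L n :: nat
    and I :: "nat \<Rightarrow> real set"
    and dl dh :: real
    and p dp :: "real \<Rightarrow> nat \<Rightarrow> real"
    and eta nup num :: "real \<Rightarrow> nat \<Rightarrow> real measure"
    and k :: "nat \<Rightarrow> nat"
    and gb :: "nat \<Rightarrow> real \<Rightarrow> real \<Rightarrow> real"
    and hh hh' :: "real \<Rightarrow> real"
  assumes V_open: "open V"
    and Delta: "0 \<le> dl" "dl \<le> dh" "dh \<le> 1"
    and I_int: "\<forall>j\<in>{1..L}. \<exists>lo hi. lo \<le> hi \<and> I j = {lo..hi}"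
    and p_prob: "\<forall>e\<in>V. (\<forall>j\<in>{1..L}. 0 \<le> p e j) \<and> (\<Sum>j=1..L. p e j) = 1"
    and p_C1: "\<forall>j\<in>{1..L}. (\<forall>e\<in>V. ((\<lambda>e'. p e' j) has_real_derivative dp e j) (at e))
                              \<and> continuous_on V (\<lambda>e. dp e j)"
    and eta_prob: "\<forall>e\<in>V. \<forall>j\<in>{1..L}. prob_space (eta e j) \<and> sets (eta e j) = sets borel
                              \<and> emeasure (eta e j) (UNIV - I j) = 0"
    and nu_fin: "\<forall>e\<in>V. \<forall>j\<in>{1..L}.
                   finite_measure (nup e j) \<and> sets (nup e j) = sets borel \<and> emeasure (nup e j) (UNIV - I j) = 0
                 \<and> finite_measure (num e j) \<and> sets (num e j) = sets borel \<and> emeasure (num e j) (UNIV - I j) = 0"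
    and nu_cont: "\<forall>j\<in>{1..L}. \<forall>f::real \<Rightarrow> real. continuous_on (I j) f \<longrightarrow>
                   continuous_on V (\<lambda>e. set_lebesgue_integral (nup e j) (I j) f
                                        - set_lebesgue_integral (num e j) (I j) f)"
    and eta_C1: "\<forall>j\<in>{1..L}. \<forall>\<phi> \<phi>'.
                   (\<forall>u\<in>I j. (\<phi> has_real_derivative \<phi>' u) (at u within I j)) \<and> continuous_on (I j) \<phi>'
                   \<longrightarrow> (\<forall>e\<in>V. ((\<lambda>e'. set_lebesgue_integral (eta e' j) (I j) \<phi>) has_real_derivative
                          (set_lebesgue_integral (nup e j) (I j) \<phi>' - set_lebesgue_integral (num e j) (I j) \<phi>'))
                          (at e))"
    and k_range: "\<forall>j\<le>n. k j \<in> {1..L}"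
    and gb_X: "\<forall>j\<le>n. \<forall>t\<in>I (k j). \<forall>x\<in>{0..1}. gb j t x \<in> {0..1}"
    and gb0_Delta: "\<forall>t\<in>I (k 0). \<forall>x\<in>{0..1}. gb 0 t x \<in> {dl..dh}"
    and g_C3: "Ck_on 3 {..Suc n} (gbox I k n) (gvec gb n)"
    and g'_nz: "\<forall>w\<in>gbox I k n. pderiv_box (gbox I k n) (Suc n) (gvec gb n) w \<noteq> 0"
    and hh_C1: "\<forall>y\<in>{dl..dh}. (hh has_real_derivative hh' y) (at y within {dl..dh})"
               "continuous_on {dl..dh} hh'"
  shows "\<forall>e\<in>V. \<forall>x\<in>{0..1}.
     let da = (\<Sum>j\<le>n. dp e (k j) * (\<Prod>i\<in>{..n} - {j}. p e (k i)));
         dB = (\<Sum>j\<le>n. Pz_int (eta e) (nup e (k j)) (num e (k j)) j k I n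
                 (\<lambda>u. hh' (gcomp gb n u x) * gder gb I k n j u x * \<bar>gder gb I k n (Suc n) u x\<bar>
                      + hh (gcomp gb n u x) * absgder_der gb I k n j u x))
     in ((\<lambda>e'. a_word (p e') n k) has_real_derivative da) (at e)
      \<and> ((\<lambda>e'. B_word (eta e') gb I k n hh x) has_real_derivative dB) (at e)
      \<and> ((\<lambda>e'. psi_hat (p e') (eta e') gb I k n hh x) has_real_derivative
             (da * B_word (eta e) gb I k n hh x + a_word (p e) n k * dB)) (at e)"
proof (intro ballI)
  fix e x :: real assume e: "e \<in> V" and x: "x \<in> {0..1}"
  let ?da = "\<Sum>j\<le>n. dp e (k j) * (\<Prod>i\<in>{..n} - {j}. p e (k i))"
  let ?dB = "\<Sum>j\<le>n. Pz_int (eta e) (nup e (k j)) (num e (k j)) j k I n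
    (\<lambda>u. hh' (gcomp gb n u x) * gder gb I k n j u x * \<bar>gder gb I k n (Suc n) u x\<bar>
      + hh (gcomp gb n u x) * absgder_der gb I k n j u x)"
  have da: "((\<lambda>e'. a_word (p e') n k) has_real_derivative ?da) (at e)"
    using p_C1 k_range e by (intro a_word_has_derivative) auto
  have "C1_measure_families n (\<lambda>i. I (k i)) V (\<lambda>s i. eta s (k i)) (\<lambda>s i. nup s (k i)) (\<lambda>s i. num s (k i))"
    using V_open I_int eta_prob nu_fin nu_cont eta_C1 k_range
    by unfold_locales (simp_all add: signed_set_integral_def)
  moreover have "branch_composition n I k gb dl dh hh hh'"
    using I_int k_range gb_X gb0_Delta g_C3 g'_nz hh_C1 by unfold_locales auto
  ultimately have dB: "((\<lambda>e'. B_word (eta e') gb I k n hh x) has_real_derivative ?dB) (at e)"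
    using e x by (rule B_word_has_derivative)
  have "((\<lambda>e'. psi_hat (p e') (eta e') gb I k n hh x) has_real_derivative
      ?da * B_word (eta e) gb I k n hh x + a_word (p e) n k * ?dB) (at e)"
    using DERIV_mult[OF da dB] by (simp add: psi_hat_def mult.commute)
  with da dB show "let da = ?da; dB = ?dB in ((\<lambda>e'. a_word (p e') n k) has_real_derivative da) (at e)
      \<and> ((\<lambda>e'. B_word (eta e') gb I k n hh x) has_real_derivative dB) (at e)
      \<and> ((\<lambda>e'. psi_hat (p e') (eta e') gb I k n hh x) has_real_derivative
             (da * B_word (eta e) gb I k n hh x + a_word (p e) n k * dB)) (at e)"
    unfolding Let_def by blast
qed

end
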